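(* Let $n\ge2$, let $R=\Bbbk\langle u,d\mid d^2u+ud^2,\ du^2+u^2d\rangle$, let $\xi$ be a primitive $n$-th root of unity and let $G=\mathbb Z_n=\langle g\rangle$ act on $R$ by $g(u)=\xi u$, $g(d)=\xi^{-1}d$. In $R\#\Bbbk G$ let $f_i=\frac1n\sum_{j=0}^{n-1}\xi^{ij}\#g^j$, $f=f_0+\dots+f_{n-1}$ and $B=f(R\#\Bbbk G)f$. Let $\beta\in\Bbbk^n$ with $\beta_i=-1$ for all $i$. Then $B\cong\mathcal H(0,\beta,0)$, via $e_i\mapsto f_i$, $u_i\mapsto f_i(u\#f)$, $d_i\mapsto (d\#f)f_i$.
   Context: $\Bbbk$ is an algebraically closed field of characteristic zero. The skew group algebra $R\#\Bbbk G$ is $R\otimes\Bbbk G$ with $(r\#g)(s\#h)=rg(s)\#gh$. Indices are mod $n$, $Q_0=\{0,\dots,n-1\}$; $Q$ is the quiver with vertices $Q_0$ and arrows $u_i:i\to i+1$, $d_i:i+1\to i$; paths are written left to right, $e_i$ is the trivial path at $i$. For $\alpha,\beta\in\Bbbk^n$, $\mathcal H(\alpha,\beta,0)$ is $\Bbbk Q$ modulo the relations $d_{i-1}u_{i-1}u_i=\alpha_iu_id_iu_i+\beta_iu_iu_{i+1}d_{i+1}$ and $d_id_{i-1}u_{i-1}=\alpha_id_iu_id_i+\beta_iu_{i+1}d_{i+1}d_i$ for all $i\in Q_0$. *)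

theory Defs
  imports "HOL-Computational_Algebra.Polynomial"
begin

text \<open>An element of an algebra with basis 'b is a finitely supported function 'b => 'a.
  A basis multiplication m x y = Some (s, z) means x * y = s z; None means x * y = 0.\<close>

definition supp :: "('b \<Rightarrow> 'a::zero) \<Rightarrow> 'b set" where
  "supp x = {b. x b \<noteq> 0}"

definition conv :: "('b \<Rightarrow> 'b \<Rightarrow> ('a \<times> 'b) option) \<Rightarrow> ('b \<Rightarrow> 'a::comm_ring_1) \<Rightarrow> ('b \<Rightarrow> 'a) \<Rightarrow> 'b \<Rightarrow> 'a" where
  "conv m x y = (\<lambda>c. \<Sum>p \<in> supp x \<times> supp y.
      (case m (fst p) (snd p) of None \<Rightarrow> 0
         | Some (s, b) \<Rightarrow> if b = c then s * x (fst p) * y (snd p) else 0))"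

definition vec :: "'b \<Rightarrow> 'b \<Rightarrow> 'a::{zero,one}" where
  "vec b = (\<lambda>c. if c = b then 1 else 0)"

text \<open>Two-sided ideal generated by S (B = set of valid basis elements).\<close>
inductive_set ideal_gen :: "('b \<Rightarrow> 'b \<Rightarrow> ('a \<times> 'b) option) \<Rightarrow> 'b set \<Rightarrow> ('b \<Rightarrow> 'a::comm_ring_1) set \<Rightarrow> ('b \<Rightarrow> 'a) set"
  for m B S where
  gen: "s \<in> S \<Longrightarrow> s \<in> ideal_gen m B S"
| zero: "(\<lambda>_. 0) \<in> ideal_gen m B S"
| add: "x \<in> ideal_gen m B S \<Longrightarrow> y \<in> ideal_gen m B S \<Longrightarrow> (\<lambda>c. x c + y c) \<in> ideal_gen m B S"
| smult: "x \<in> ideal_gen m B S \<Longrightarrow> (\<lambda>c. a * x c) \<in> ideal_gen m B S"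
| left: "b \<in> B \<Longrightarrow> x \<in> ideal_gen m B S \<Longrightarrow> conv m (vec b) x \<in> ideal_gen m B S"
| right: "b \<in> B \<Longrightarrow> x \<in> ideal_gen m B S \<Longrightarrow> conv m x (vec b) \<in> ideal_gen m B S"

datatype letter = U | D

definition free_mult :: "letter list \<Rightarrow> letter list \<Rightarrow> ('a::comm_ring_1 \<times> letter list) option" where
  "free_mult v w = Some (1, v @ w)"

definition R_rels :: "(letter list \<Rightarrow> 'a::comm_ring_1) set" where
  "R_rels = {(\<lambda>c. vec [D,D,U] c + vec [U,D,D] c), (\<lambda>c. vec [D,U,U] c + vec [U,U,D] c)}"

text \<open>R = k<u,d> / I_R\<close>
definition I_R :: "(letter list \<Rightarrow> 'a::comm_ring_1) set" where
  "I_R = ideal_gen free_mult UNIV R_rels"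

section \<open>The skew group algebra (k<u,d> # kG) and R # kG, G = Z_n = <g>, g^j ~ j mod n\<close>

definition cnt :: "letter \<Rightarrow> letter list \<Rightarrow> nat" where
  "cnt a w = length (filter (\<lambda>x. x = a) w)"

text \<open>g^j(w) = act_coeff xi j w * w, since g(u) = xi u, g(d) = xi^-1 d.\<close>
definition act_coeff :: "'a::field \<Rightarrow> nat \<Rightarrow> letter list \<Rightarrow> 'a" where
  "act_coeff \<xi> j w = \<xi> ^ (j * cnt U w) * (inverse \<xi>) ^ (j * cnt D w)"

definition skew_mult :: "nat \<Rightarrow> 'a::field \<Rightarrow> (letter list \<times> nat) \<Rightarrow> (letter list \<times> nat) \<Rightarrow> ('a \<times> (letter list \<times> nat)) option" where
  "skew_mult n \<xi> p q = Some (act_coeff \<xi> (snd p) (fst q), (fst p @ fst q, (snd p + snd q) mod n))"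

definition smul :: "nat \<Rightarrow> 'a::field \<Rightarrow> (letter list \<times> nat \<Rightarrow> 'a) \<Rightarrow> (letter list \<times> nat \<Rightarrow> 'a) \<Rightarrow> (letter list \<times> nat \<Rightarrow> 'a)" where
  "smul n \<xi> = conv (skew_mult n \<xi>)"

text \<open>carrier of k<u,d> # kG (group index j < n)\<close>
definition SG :: "nat \<Rightarrow> (letter list \<times> nat \<Rightarrow> 'a::zero) set" where
  "SG n = {x. finite (supp x) \<and> (\<forall>w j. x (w, j) \<noteq> 0 \<longrightarrow> j < n)}"

text \<open>R # kG = R (x) kG = (k<u,d> (x) kG) / (I_R (x) kG)\<close>
definition J_skew :: "(letter list \<times> nat \<Rightarrow> 'a::comm_ring_1) set" where
  "J_skew = {x. \<forall>j. (\<lambda>w. x (w, j)) \<in> I_R}"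

definition tens :: "(letter list \<Rightarrow> 'a::times) \<Rightarrow> (nat \<Rightarrow> 'a) \<Rightarrow> (letter list \<times> nat \<Rightarrow> 'a)" where
  "tens r h = (\<lambda>(w, j). r w * h j)"

definition fG :: "nat \<Rightarrow> 'a::field \<Rightarrow> nat \<Rightarrow> nat \<Rightarrow> 'a" where
  "fG n \<xi> i = (\<lambda>j. if j < n then \<xi> ^ (i * j) / of_nat n else 0)"

definition fsumG :: "nat \<Rightarrow> 'a::field \<Rightarrow> nat \<Rightarrow> 'a" where
  "fsumG n \<xi> = (\<lambda>j. \<Sum>i<n. fG n \<xi> i j)"

definition fi :: "nat \<Rightarrow> 'a::field \<Rightarrow> nat \<Rightarrow> (letter list \<times> nat \<Rightarrow> 'a)" where
  "fi n \<xi> i = tens (vec []) (fG n \<xi> i)"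

definition ff :: "nat \<Rightarrow> 'a::field \<Rightarrow> (letter list \<times> nat \<Rightarrow> 'a)" where
  "ff n \<xi> = tens (vec []) (fsumG n \<xi>)"

definition u_f :: "nat \<Rightarrow> 'a::field \<Rightarrow> (letter list \<times> nat \<Rightarrow> 'a)" where
  "u_f n \<xi> = tens (vec [U]) (fsumG n \<xi>)"

definition d_f :: "nat \<Rightarrow> 'a::field \<Rightarrow> (letter list \<times> nat \<Rightarrow> 'a)" where
  "d_f n \<xi> = tens (vec [D]) (fsumG n \<xi>)"

definition one_skew :: "(letter list \<times> nat \<Rightarrow> 'a::{zero,one})" where
  "one_skew = vec ([], 0)"

text \<open>A path is (start vertex, list of arrows), U = some u_i, D = some d_i.\<close>
definition step :: "nat \<Rightarrow> nat \<Rightarrow> letter \<Rightarrow> nat" where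
  "step n i a = (case a of U \<Rightarrow> (i + 1) mod n | D \<Rightarrow> (i + n - 1) mod n)"

definition end_v :: "nat \<Rightarrow> nat \<Rightarrow> letter list \<Rightarrow> nat" where
  "end_v n i v = foldl (step n) i v"

definition path_mult :: "nat \<Rightarrow> (nat \<times> letter list) \<Rightarrow> (nat \<times> letter list) \<Rightarrow> ('a::comm_ring_1 \<times> (nat \<times> letter list)) option" where
  "path_mult n p q = (if end_v n (fst p) (snd p) = fst q then Some (1, (fst p, snd p @ snd q)) else None)"

definition PQ :: "nat \<Rightarrow> (nat \<times> letter list \<Rightarrow> 'a::zero) set" where
  "PQ n = {x. finite (supp x) \<and> (\<forall>i w. x (i, w) \<noteq> 0 \<longrightarrow> i < n)}"

definition H_rels :: "nat \<Rightarrow> (nat \<Rightarrow> 'a) \<Rightarrow> (nat \<Rightarrow> 'a) \<Rightarrow> (nat \<times> letter list \<Rightarrow> 'a::comm_ring_1) set" where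
  "H_rels n \<alpha> \<beta> =
     {(\<lambda>c. vec (i, [D,U,U]) c - \<alpha> i * vec (i, [U,D,U]) c - \<beta> i * vec (i, [U,U,D]) c) | i. i < n}
   \<union> {(\<lambda>c. vec ((i+1) mod n, [D,D,U]) c - \<alpha> i * vec ((i+1) mod n, [D,U,D]) c
              - \<beta> i * vec ((i+1) mod n, [U,D,D]) c) | i. i < n}"

definition H_ideal :: "nat \<Rightarrow> (nat \<Rightarrow> 'a) \<Rightarrow> (nat \<Rightarrow> 'a) \<Rightarrow> (nat \<times> letter list \<Rightarrow> 'a::comm_ring_1) set" where
  "H_ideal n \<alpha> \<beta> = ideal_gen (path_mult n) {p. fst p < n} (H_rels n \<alpha> \<beta>)"

definition arrow_img :: "nat \<Rightarrow> 'a::field \<Rightarrow> nat \<Rightarrow> letter \<Rightarrow> (letter list \<times> nat \<Rightarrow> 'a)" where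
  "arrow_img n \<xi> i a = (case a of
      U \<Rightarrow> smul n \<xi> (fi n \<xi> i) (u_f n \<xi>)
    | D \<Rightarrow> smul n \<xi> (d_f n \<xi>) (fi n \<xi> ((i + n - 1) mod n)))"

fun arrows_img :: "nat \<Rightarrow> 'a::field \<Rightarrow> nat \<Rightarrow> letter list \<Rightarrow> (letter list \<times> nat \<Rightarrow> 'a)" where
  "arrows_img n \<xi> i [] = one_skew"
| "arrows_img n \<xi> i (a # w) = smul n \<xi> (arrow_img n \<xi> i a) (arrows_img n \<xi> (step n i a) w)"

definition psi_basis :: "nat \<Rightarrow> 'a::field \<Rightarrow> nat \<times> letter list \<Rightarrow> (letter list \<times> nat \<Rightarrow> 'a)" where
  "psi_basis n \<xi> p = (if snd p = [] then fi n \<xi> (fst p) else arrows_img n \<xi> (fst p) (snd p))"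

definition psi :: "nat \<Rightarrow> 'a::field \<Rightarrow> (nat \<times> letter list \<Rightarrow> 'a) \<Rightarrow> (letter list \<times> nat \<Rightarrow> 'a)" where
  "psi n \<xi> x = (\<lambda>c. \<Sum>b \<in> supp x. x b * psi_basis n \<xi> b c)"

definition primitive_root :: "nat \<Rightarrow> 'a::field \<Rightarrow> bool" where
  "primitive_root n \<xi> \<longleftrightarrow> \<xi> ^ n = 1 \<and> (\<forall>k. 0 < k \<and> k < n \<longrightarrow> \<xi> ^ k \<noteq> 1)"

end

theory Submission
  imports Defs "HOL-Library.Sublist"
begin

(*
  Since f_0 + ... + f_(n-1) = 1, f is the identity and B = R # kG.  Put deg w = #u - #d for a
  word w; then g^j(w) = xi^(j deg w) w, so f_a (w # 1) = w # f_(a + deg w) and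
  (w # f_a)(w' # f_b) = [a + deg w' = b mod n] ww' # f_b.  The path from i labelled w is sent
  to w # f_k with k its end vertex; this is multiplicative, and by discrete Fourier inversion
  it maps the paths bijectively onto a basis of k<u,d> # kG.
  For the kernel, split an element of kQ into its parts ending at the vertices k; since a word
  labels exactly one path ending at k, each part is a combination of words.  The relations of
  R are homogeneous for deg, so the ideal of R is graded by deg mod n, and for alpha = 0 and
  beta = -1 the relations of H(0, beta, 0) are those of R placed at the vertices.  Hence an
  element lies in the ideal of H(0, beta, 0) iff every part lies in the ideal of R, iff its
  image lies in the ideal of R # kG.
*)

section \<open>Finitely supported functions and convolution\<close>

definition basis_coeff :: "('b \<Rightarrow> 'b \<Rightarrow> ('a \<times> 'b) option) \<Rightarrow> 'b \<Rightarrow> 'b \<Rightarrow> 'b \<Rightarrow> 'a::comm_ring_1" where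
  "basis_coeff m a b c = (case m a b of None \<Rightarrow> 0 | Some (s, z) \<Rightarrow> if z = c then s else 0)"

definition lin_ext :: "('b \<Rightarrow> 'c \<Rightarrow> 'a::comm_ring_1) \<Rightarrow> ('b \<Rightarrow> 'a) \<Rightarrow> 'c \<Rightarrow> 'a" where
  "lin_ext g x = (\<lambda>c. \<Sum>b \<in> supp x. x b * g b c)"

lemma supp_vec: "supp (vec b :: _ \<Rightarrow> 'a::zero_neq_one) = {b}"
  by (auto simp: supp_def vec_def)

lemma supp_add_subset: "supp (\<lambda>c. x c + y c) \<subseteq> supp x \<union> supp (y :: _ \<Rightarrow> 'a::monoid_add)"
  by (auto simp: supp_def)

lemma supp_mult_subset: "supp (\<lambda>c. a * x c) \<subseteq> supp (x :: _ \<Rightarrow> 'a::mult_zero)"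
  by (auto simp: supp_def)

lemma supp_sum_subset:
  fixes X :: "'i \<Rightarrow> 'b \<Rightarrow> 'a::comm_ring_1"
  assumes "\<And>a. a \<in> A \<Longrightarrow> supp (X a) \<subseteq> T"
  shows "supp (\<lambda>c. \<Sum>a\<in>A. f a * X a c) \<subseteq> T"
proof
  fix c assume c: "c \<in> supp (\<lambda>c. \<Sum>a\<in>A. f a * X a c)"
  show "c \<in> T"
  proof (rule ccontr)
    assume "c \<notin> T"
    then have "X a c = 0" if "a \<in> A" for a using assms that by (auto simp: supp_def)
    then show False using c by (simp add: supp_def)
  qed
qed

lemma fun_eq_sum_vec:
  fixes x :: "'b \<Rightarrow> 'a::comm_ring_1"
  assumes "finite (supp x)"
  shows "x = (\<lambda>c. \<Sum>b\<in>supp x. x b * vec b c)"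
proof
  fix c
  have "(\<Sum>b\<in>supp x. x b * vec b c) = (\<Sum>b\<in>supp x. if b = c then x c else 0)"
    by (rule sum.cong) (auto simp: vec_def)
  also have "\<dots> = x c" using assms by (auto simp: supp_def)
  finally show "x c = (\<Sum>b\<in>supp x. x b * vec b c)" by simp
qed

lemma sum_mult_delta:
  fixes r :: "'b \<Rightarrow> 'a::comm_ring_1"
  assumes "finite S" "supp r \<subseteq> S"
  shows "(\<Sum>b\<in>S. r b * (if P \<and> b = b0 then 1 else 0)) = (if P then r b0 else 0)"
  using assms by (cases "b0 \<in> S") (auto simp: supp_def if_distrib cong: if_cong)

lemma conv_eq_sum_basis_coeff:
  "conv m x y c = (\<Sum>p \<in> supp x \<times> supp y. x (fst p) * y (snd p) * basis_coeff m (fst p) (snd p) c)"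
  unfolding conv_def basis_coeff_def
  by (rule sum.cong) (auto split: option.splits)

lemma conv_eq_sum_superset:
  fixes x :: "'b \<Rightarrow> 'a::comm_ring_1"
  assumes "finite S" "finite T" "supp x \<subseteq> S" "supp y \<subseteq> T"
  shows "conv m x y c = (\<Sum>a\<in>S. \<Sum>b\<in>T. x a * y b * basis_coeff m a b c)"
proof -
  have "conv m x y c = (\<Sum>p \<in> S \<times> T. x (fst p) * y (snd p) * basis_coeff m (fst p) (snd p) c)"
    unfolding conv_eq_sum_basis_coeff
    by (rule sum.mono_neutral_left) (use assms in \<open>auto simp: supp_def\<close>)
  then show ?thesis by (simp add: sum.cartesian_product case_prod_beta)
qed

lemma finite_supp_conv: "finite (supp (conv m x y))"
proof (cases "finite (supp x \<times> supp y)")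
  case True
  define target where "target p = (case m (fst p) (snd p) of None \<Rightarrow> undefined | Some (s, z) \<Rightarrow> z)" for p
  have "supp (conv m x y) \<subseteq> target ` (supp x \<times> supp y)"
  proof
    fix c assume c: "c \<in> supp (conv m x y)"
    show "c \<in> target ` (supp x \<times> supp y)"
    proof (rule ccontr)
      assume "c \<notin> target ` (supp x \<times> supp y)"
      then have "conv m x y c = 0" unfolding conv_eq_sum_basis_coeff
        by (intro sum.neutral) (force simp: basis_coeff_def target_def split: option.splits)
      then show False using c by (simp add: supp_def)
    qed
  qed
  then show ?thesis using True finite_subset by blast
next
  case False
  then show ?thesis by (simp add: conv_def supp_def)
qed

lemma conv_vec_left:
  "finite (supp (y :: 'b \<Rightarrow> 'a::comm_ring_1)) \<Longrightarrow> conv m (vec a) y c = (\<Sum>b\<in>supp y. y b * basis_coeff m a b c)"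
  by (subst conv_eq_sum_superset[of "{a}" "supp y"]) (simp_all add: supp_vec, simp add: vec_def)

lemma conv_vec_right:
  "finite (supp (x :: 'b \<Rightarrow> 'a::comm_ring_1)) \<Longrightarrow> conv m x (vec a) c = (\<Sum>b\<in>supp x. x b * basis_coeff m b a c)"
  by (subst conv_eq_sum_superset[of "supp x" "{a}"]) (simp_all add: supp_vec, simp add: vec_def)

lemma conv_vec_vec: "conv m (vec a :: 'b \<Rightarrow> 'a::comm_ring_1) (vec b) c = basis_coeff m a b c"
  by (subst conv_eq_sum_superset[of "{a}" "{b}"]) (simp_all add: supp_vec, simp add: vec_def)

lemma conv_sum_left:
  fixes X :: "'i \<Rightarrow> 'b \<Rightarrow> 'a::comm_ring_1"
  assumes "finite A" "finite S" "\<And>a. a \<in> A \<Longrightarrow> supp (X a) \<subseteq> S" "finite (supp y)"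
  shows "conv m (\<lambda>c. \<Sum>a\<in>A. f a * X a c) y c = (\<Sum>a\<in>A. f a * conv m (X a) y c)"
proof -
  have "conv m (\<lambda>c. \<Sum>a\<in>A. f a * X a c) y c
      = (\<Sum>s\<in>S. \<Sum>t\<in>supp y. (\<Sum>a\<in>A. f a * X a s) * y t * basis_coeff m s t c)"
    by (rule conv_eq_sum_superset[OF assms(2,4) supp_sum_subset[OF assms(3)] subset_refl])
  also have "\<dots> = (\<Sum>a\<in>A. f a * (\<Sum>s\<in>S. \<Sum>t\<in>supp y. X a s * y t * basis_coeff m s t c))"
    by (simp add: sum_distrib_left sum_distrib_right mult_ac sum.swap[of _ A])
  also have "\<dots> = (\<Sum>a\<in>A. f a * conv m (X a) y c)"
    by (intro sum.cong refl, subst conv_eq_sum_superset[of S "supp y"]) (use assms in auto)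
  finally show ?thesis .
qed

lemma conv_sum_right:
  fixes Y :: "'i \<Rightarrow> 'b \<Rightarrow> 'a::comm_ring_1"
  assumes "finite B" "finite T" "\<And>b. b \<in> B \<Longrightarrow> supp (Y b) \<subseteq> T" "finite (supp x)"
  shows "conv m x (\<lambda>c. \<Sum>b\<in>B. g b * Y b c) c = (\<Sum>b\<in>B. g b * conv m x (Y b) c)"
proof -
  have "conv m x (\<lambda>c. \<Sum>b\<in>B. g b * Y b c) c
      = (\<Sum>s\<in>supp x. \<Sum>t\<in>T. x s * (\<Sum>b\<in>B. g b * Y b t) * basis_coeff m s t c)"
    by (rule conv_eq_sum_superset[OF assms(4,2) subset_refl supp_sum_subset[OF assms(3)]])
  also have "\<dots> = (\<Sum>b\<in>B. g b * (\<Sum>s\<in>supp x. \<Sum>t\<in>T. x s * Y b t * basis_coeff m s t c))"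
    by (simp add: sum_distrib_left sum_distrib_right mult_ac sum.swap[of _ B])
  also have "\<dots> = (\<Sum>b\<in>B. g b * conv m x (Y b) c)"
    by (intro sum.cong refl, subst conv_eq_sum_superset[of "supp x" T]) (use assms in auto)
  finally show ?thesis .
qed

lemma conv_sum_sum:
  fixes X :: "'i \<Rightarrow> 'b \<Rightarrow> 'a::comm_ring_1"
  assumes "finite A" "finite B" "finite S" "finite T"
    and "\<And>a. a \<in> A \<Longrightarrow> supp (X a) \<subseteq> S" "\<And>b. b \<in> B \<Longrightarrow> supp (Y b) \<subseteq> T"
  shows "conv m (\<lambda>c. \<Sum>a\<in>A. f a * X a c) (\<lambda>c. \<Sum>b\<in>B. g b * Y b c) c
       = (\<Sum>a\<in>A. \<Sum>b\<in>B. f a * g b * conv m (X a) (Y b) c)"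
proof -
  have "finite (supp (\<lambda>c. \<Sum>b\<in>B. g b * Y b c))"
    using assms(4) supp_sum_subset[OF assms(6)] by (rule finite_subset[rotated])
  moreover have "finite (supp (X a))" if "a \<in> A" for a
    using assms(3,5) that finite_subset by blast
  ultimately show ?thesis
    using assms
    by (simp add: conv_sum_left[where S = S] conv_sum_right[where T = T] sum_distrib_left mult.assoc)
qed

lemma lin_ext_eq_sum_superset:
  fixes x :: "'b \<Rightarrow> 'a::comm_ring_1"
  assumes "finite B" "supp x \<subseteq> B"
  shows "lin_ext g x c = (\<Sum>b\<in>B. x b * g b c)"
  unfolding lin_ext_def
  by (rule sum.mono_neutral_left) (use assms in \<open>auto simp: supp_def\<close>)

lemma lin_ext_sum:
  fixes X :: "'i \<Rightarrow> 'b \<Rightarrow> 'a::comm_ring_1"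
  assumes "finite A" "finite T" "\<And>a. a \<in> A \<Longrightarrow> supp (X a) \<subseteq> T"
  shows "lin_ext g (\<lambda>c. \<Sum>a\<in>A. f a * X a c) c = (\<Sum>a\<in>A. f a * lin_ext g (X a) c)"
proof -
  have "lin_ext g (\<lambda>c. \<Sum>a\<in>A. f a * X a c) c = (\<Sum>t\<in>T. (\<Sum>a\<in>A. f a * X a t) * g t c)"
    by (rule lin_ext_eq_sum_superset[OF assms(2) supp_sum_subset[OF assms(3)]])
  also have "\<dots> = (\<Sum>a\<in>A. f a * (\<Sum>t\<in>T. X a t * g t c))"
    by (simp add: sum_distrib_left sum_distrib_right mult_ac sum.swap[of _ T])
  also have "\<dots> = (\<Sum>a\<in>A. f a * lin_ext g (X a) c)"
    by (intro sum.cong refl) (simp add: lin_ext_eq_sum_superset[OF assms(2) assms(3)])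
  finally show ?thesis .
qed

lemma lin_ext_vec: "lin_ext g (vec b :: _ \<Rightarrow> 'a::comm_ring_1) = g b"
  unfolding lin_ext_def supp_vec by (rule ext) (simp add: vec_def)

lemma lin_ext_zero: "lin_ext g (\<lambda>_. 0) = (\<lambda>_. 0)"
  by (simp add: lin_ext_def supp_def)

lemma ideal_gen_sum:
  assumes "finite A" "\<And>a. a \<in> A \<Longrightarrow> r a \<in> ideal_gen m B S"
  shows "(\<lambda>c. \<Sum>a\<in>A. r a c) \<in> ideal_gen m B S"
  using assms
proof (induction A rule: finite_induct)
  case empty
  then show ?case by (simp add: ideal_gen.zero)
next
  case (insert a A)
  then show ?case using ideal_gen.add[of "r a" m B S "\<lambda>c. \<Sum>a\<in>A. r a c"] by simp
qed

lemma finite_supp_ideal_gen: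
  assumes "\<And>s. s \<in> S \<Longrightarrow> finite (supp s)"
  shows "x \<in> ideal_gen m B S \<Longrightarrow> finite (supp x)"
proof (induction rule: ideal_gen.induct)
  case (add x y) then show ?case using supp_add_subset[of x y] finite_subset by blast
next
  case (smult x a) then show ?case using supp_mult_subset[of a x] finite_subset by blast
next
  case zero then show ?case by (simp add: supp_def)
qed (simp_all add: assms finite_supp_conv)

section \<open>Words and paths\<close>

definition deg :: "letter list \<Rightarrow> int" where
  "deg w = int (cnt U w) - int (cnt D w)"

lemma deg_simps [simp]:
  "deg [] = 0" "deg (U # w) = deg w + 1" "deg (D # w) = deg w - 1" "deg (v @ w) = deg v + deg w"
  by (auto simp: deg_def cnt_def)

lemma eq_append_iff_prefix: "w = a @ b \<longleftrightarrow> prefix a w \<and> b = drop (length a) w"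
  by (auto simp: prefix_def)

lemma eq_append_iff_suffix: "w = b @ a \<longleftrightarrow> suffix a w \<and> b = take (length w - length a) w"
proof
  assume "suffix a w \<and> b = take (length w - length a) w"
  then show "w = b @ a" using suffix_take by blast
qed (simp add: suffix_def)

lemma basis_coeff_free_mult: "basis_coeff free_mult a b c = (if c = a @ b then 1 else 0)"
  by (auto simp: basis_coeff_def free_mult_def)

lemma basis_coeff_path_mult:
  "basis_coeff (path_mult n) a b c =
     (if end_v n (fst a) (snd a) = fst b \<and> c = (fst a, snd a @ snd b) then 1 else 0)"
  by (auto simp: basis_coeff_def path_mult_def)

lemma conv_free_vec_left:
  fixes r :: "letter list \<Rightarrow> 'a::comm_ring_1"
  assumes "finite (supp r)"
  shows "conv free_mult (vec a) r w = (if prefix a w then r (drop (length a) w) else 0)" (is "_ = ?rhs")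
proof -
  have "conv free_mult (vec a) r w
      = (\<Sum>b\<in>supp r. r b * (if prefix a w \<and> b = drop (length a) w then 1 else 0))"
    unfolding conv_vec_left[OF assms]
    by (intro sum.cong refl) (simp add: basis_coeff_free_mult eq_append_iff_prefix)
  also have "\<dots> = ?rhs" by (rule sum_mult_delta[OF assms subset_refl])
  finally show ?thesis .
qed

lemma conv_free_vec_right:
  fixes r :: "letter list \<Rightarrow> 'a::comm_ring_1"
  assumes "finite (supp r)"
  shows "conv free_mult r (vec a) w = (if suffix a w then r (take (length w - length a) w) else 0)" (is "_ = ?rhs")
proof -
  have "conv free_mult r (vec a) w
      = (\<Sum>b\<in>supp r. r b * (if suffix a w \<and> b = take (length w - length a) w then 1 else 0))"
    unfolding conv_vec_right[OF assms]
    by (intro sum.cong refl) (simp add: basis_coeff_free_mult eq_append_iff_suffix)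
  also have "\<dots> = ?rhs" by (rule sum_mult_delta[OF assms subset_refl])
  finally show ?thesis .
qed

lemma conv_path_vec_left:
  fixes y :: "nat \<times> letter list \<Rightarrow> 'a::comm_ring_1"
  assumes "finite (supp y)"
  shows "conv (path_mult n) (vec (i0, u)) y (i, v) =
    (if i = i0 \<and> prefix u v then y (end_v n i0 u, drop (length u) v) else 0)" (is "_ = ?rhs")
proof -
  have "conv (path_mult n) (vec (i0, u)) y (i, v)
      = (\<Sum>b\<in>supp y. y b * (if (i = i0 \<and> prefix u v) \<and> b = (end_v n i0 u, drop (length u) v) then 1 else 0))"
    unfolding conv_vec_left[OF assms]
    by (intro sum.cong refl) (auto simp: basis_coeff_path_mult eq_append_iff_prefix)
  also have "\<dots> = ?rhs" by (rule sum_mult_delta[OF assms subset_refl])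
  finally show ?thesis .
qed

lemma conv_path_vec_right:
  fixes y :: "nat \<times> letter list \<Rightarrow> 'a::comm_ring_1"
  assumes "finite (supp y)"
  shows "conv (path_mult n) y (vec (i0, u)) (i, v) =
    (if suffix u v \<and> end_v n i (take (length v - length u) v) = i0
     then y (i, take (length v - length u) v) else 0)" (is "_ = ?rhs")
proof -
  have "conv (path_mult n) y (vec (i0, u)) (i, v)
      = (\<Sum>b\<in>supp y. y b * (if (suffix u v \<and> end_v n i (take (length v - length u) v) = i0)
                               \<and> b = (i, take (length v - length u) v) then 1 else 0))"
    unfolding conv_vec_right[OF assms]
    by (intro sum.cong refl) (auto simp: basis_coeff_path_mult eq_append_iff_suffix)
  also have "\<dots> = ?rhs" by (rule sum_mult_delta[OF assms subset_refl])
  finally show ?thesis .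
qed

lemma end_v_Nil [simp]: "end_v n i [] = i"
  by (simp add: end_v_def)

lemma end_v_Cons: "end_v n i (a # w) = end_v n (step n i a) w"
  by (simp add: end_v_def)

lemma end_v_append: "end_v n i (v @ w) = end_v n (end_v n i v) w"
  by (simp add: end_v_def)

definition start_v :: "nat \<Rightarrow> nat \<Rightarrow> letter list \<Rightarrow> nat" where
  "start_v n k w = nat ((int k - deg w) mod int n)"

section \<open>The grading of R by degree modulo n\<close>

lemma finite_supp_R_rels: "s \<in> R_rels \<Longrightarrow> finite (supp s)"
proof -
  assume "s \<in> R_rels"
  then obtain a b where "s = (\<lambda>c. vec a c + vec b c)"
    by (auto simp: R_rels_def)
  then have "supp s \<subseteq> {a, b}" by (auto simp: supp_def vec_def)
  then show ?thesis by (rule finite_subset) simp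
qed

lemma finite_supp_I_R: "r \<in> I_R \<Longrightarrow> finite (supp r)"
  unfolding I_R_def by (rule finite_supp_ideal_gen[OF finite_supp_R_rels])

definition deg_proj :: "nat \<Rightarrow> int \<Rightarrow> (letter list \<Rightarrow> 'a::zero) \<Rightarrow> letter list \<Rightarrow> 'a" where
  "deg_proj n e r = (\<lambda>w. if deg w mod int n = e mod int n then r w else 0)"

lemma supp_deg_proj: "supp (deg_proj n e r) \<subseteq> supp r"
  by (auto simp: supp_def deg_proj_def)

lemma deg_proj_conv_vec_left:
  fixes x :: "letter list \<Rightarrow> 'a::comm_ring_1"
  assumes x: "finite (supp x)"
  shows "deg_proj n e (conv free_mult (vec b) x) = conv free_mult (vec b) (deg_proj n (e - deg b) x)"
proof
  fix w
  have p: "finite (supp (deg_proj n (e - deg b) x))"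
    by (rule finite_subset[OF supp_deg_proj x])
  show "deg_proj n e (conv free_mult (vec b) x) w = conv free_mult (vec b) (deg_proj n (e - deg b) x) w"
  proof (cases "prefix b w")
    case True
    then obtain d where w: "w = b @ d"
      by (auto simp: prefix_def)
    have "deg w mod int n = e mod int n \<longleftrightarrow> deg d mod int n = (e - deg b) mod int n"
      by (simp add: w mod_eq_dvd_iff algebra_simps)
    then show ?thesis
      by (simp only: deg_proj_def[of n e] conv_free_vec_left[OF x] conv_free_vec_left[OF p]) (simp add: deg_proj_def w)
  qed (simp only: deg_proj_def[of n e] conv_free_vec_left[OF x] conv_free_vec_left[OF p], simp add: deg_proj_def)
qed

lemma deg_proj_conv_vec_right:
  fixes x :: "letter list \<Rightarrow> 'a::comm_ring_1"
  assumes x: "finite (supp x)"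
  shows "deg_proj n e (conv free_mult x (vec b)) = conv free_mult (deg_proj n (e - deg b) x) (vec b)"
proof
  fix w
  have p: "finite (supp (deg_proj n (e - deg b) x))"
    by (rule finite_subset[OF supp_deg_proj x])
  show "deg_proj n e (conv free_mult x (vec b)) w = conv free_mult (deg_proj n (e - deg b) x) (vec b) w"
  proof (cases "suffix b w")
    case True
    then obtain d where w: "w = d @ b"
      by (auto simp: suffix_def)
    have "deg w mod int n = e mod int n \<longleftrightarrow> deg d mod int n = (e - deg b) mod int n"
      by (simp add: w mod_eq_dvd_iff algebra_simps)
    then show ?thesis
      by (simp only: deg_proj_def[of n e] conv_free_vec_right[OF x] conv_free_vec_right[OF p]) (simp add: deg_proj_def w)
  qed (simp only: deg_proj_def[of n e] conv_free_vec_right[OF x] conv_free_vec_right[OF p], simp add: deg_proj_def)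
qed

lemma deg_proj_in_I_R: "r \<in> I_R \<Longrightarrow> deg_proj n e r \<in> I_R"
  unfolding I_R_def
proof (induction r arbitrary: e rule: ideal_gen.induct)
  case (gen s)
  then obtain a b where s: "s = (\<lambda>c. vec a c + vec b c)" and "deg a = deg b"
    by (auto simp: R_rels_def)
  then have "deg_proj n e s = (if deg a mod int n = e mod int n then s else (\<lambda>_. 0))"
    by (auto simp: deg_proj_def vec_def)
  then show ?case using gen by (simp add: ideal_gen.gen ideal_gen.zero)
next
  case zero
  then show ?case by (simp add: deg_proj_def ideal_gen.zero)
next
  case (add x y)
  have "deg_proj n e (\<lambda>c. x c + y c) = (\<lambda>c. deg_proj n e x c + deg_proj n e y c)"
    by (auto simp: deg_proj_def)
  then show ?case using add.IH by (simp add: ideal_gen.add)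
next
  case (smult x a)
  have "deg_proj n e (\<lambda>c. a * x c) = (\<lambda>c. a * deg_proj n e x c)"
    by (auto simp: deg_proj_def)
  then show ?case using smult.IH by (simp add: ideal_gen.smult)
next
  case (left b x)
  then have "finite (supp x)"
    using finite_supp_I_R unfolding I_R_def by blast
  then show ?case
    using left.IH by (simp add: deg_proj_conv_vec_left ideal_gen.left)
next
  case (right b x)
  then have "finite (supp x)"
    using finite_supp_I_R unfolding I_R_def by blast
  then show ?case
    using right.IH by (simp add: deg_proj_conv_vec_right ideal_gen.right)
qed

lemma zero_in_J_skew: "(\<lambda>_. 0) \<in> J_skew"
  by (simp add: J_skew_def I_R_def ideal_gen.zero)

section \<open>The parts of a path combination ending at a vertex\<close>

lemma PQ_iff: "x \<in> PQ n \<longleftrightarrow> finite (supp x) \<and> (\<forall>p\<in>supp x. fst p < n)"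
  by (auto simp: PQ_def supp_def)

lemma PQ_finite_supp: "x \<in> PQ n \<Longrightarrow> finite (supp x)"
  by (simp add: PQ_iff)

lemma PQ_supp_less: "x \<in> PQ n \<Longrightarrow> p \<in> supp x \<Longrightarrow> fst p < n"
  by (simp add: PQ_iff)

lemma PQ_add: "x \<in> PQ n \<Longrightarrow> y \<in> PQ n \<Longrightarrow> (\<lambda>c. x c + y c :: 'a::monoid_add) \<in> PQ n"
  using supp_add_subset[of x y] finite_subset by (fastforce simp: PQ_iff)

lemma PQ_mult: "x \<in> PQ n \<Longrightarrow> (\<lambda>c. a * x c :: 'a::mult_zero) \<in> PQ n"
  using supp_mult_subset[of a x] finite_subset by (fastforce simp: PQ_iff)

lemma vec_in_PQ: "fst p < n \<Longrightarrow> (vec p :: _ \<Rightarrow> 'a::zero_neq_one) \<in> PQ n"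
  by (simp add: PQ_iff supp_vec)

lemma PQ_conv:
  assumes "x \<in> PQ n"
  shows "conv (path_mult n) x y \<in> PQ n"
proof -
  have "fst c < n" if "c \<in> supp (conv (path_mult n) x y)" for c
  proof -
    from that have "conv (path_mult n) x y c \<noteq> 0"
      by (simp add: supp_def)
    then obtain p where "p \<in> supp x \<times> supp y"
      and "x (fst p) * y (snd p) * basis_coeff (path_mult n) (fst p) (snd p) c \<noteq> 0"
      unfolding conv_eq_sum_basis_coeff by (rule sum.not_neutral_contains_not_neutral)
    then show ?thesis
      using assms by (auto simp: basis_coeff_path_mult PQ_iff split: if_splits)
  qed
  then show ?thesis
    by (simp add: PQ_iff finite_supp_conv)
qed

lemma H_ideal_subset_PQ: "x \<in> H_ideal n \<alpha> \<beta> \<Longrightarrow> x \<in> PQ n"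
  unfolding H_ideal_def
proof (induction rule: ideal_gen.induct)
  case (gen s)
  then obtain p q r a b where s: "s = (\<lambda>c. vec p c - a * vec q c - b * vec r c)"
    and "fst p < n" "fst q < n" "fst r < n"
    by (auto simp: H_rels_def)
  moreover have "supp s \<subseteq> {p, q, r}"
    by (auto simp: s supp_def vec_def)
  ultimately show ?case
    by (auto simp: PQ_iff intro: finite_subset)
next
  case zero
  then show ?case by (simp add: PQ_iff supp_def)
next
  case (add x y)
  then show ?case by (simp add: PQ_add)
next
  case (smult x a)
  then show ?case by (simp add: PQ_mult)
next
  case (left b x)
  then show ?case by (simp add: PQ_conv vec_in_PQ)
next
  case (right b x)
  then show ?case by (simp add: PQ_conv)
qed

definition ending_words :: "nat \<Rightarrow> (nat \<times> letter list \<Rightarrow> 'a) \<Rightarrow> nat \<Rightarrow> letter list \<Rightarrow> 'a" where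
  "ending_words n x k = (\<lambda>w. x (start_v n k w, w))"

definition ending_paths :: "nat \<Rightarrow> nat \<Rightarrow> (letter list \<Rightarrow> 'a::zero) \<Rightarrow> nat \<times> letter list \<Rightarrow> 'a" where
  "ending_paths n k r = (\<lambda>(i, w). if i = start_v n k w then r w else 0)"

lemma ending_paths_apply: "ending_paths n k r (i, w) = (if i = start_v n k w then r w else 0)"
  by (simp add: ending_paths_def)

lemma ending_paths_vec: "ending_paths n k (vec w) = vec (start_v n k w, w)"
  by (auto simp: ending_paths_def vec_def)

lemma ending_paths_add: "ending_paths n k (\<lambda>c. x c + y c) = (\<lambda>c. ending_paths n k x c + ending_paths n k y c :: 'a::monoid_add)"
  by (auto simp: ending_paths_def)

lemma ending_paths_mult: "ending_paths n k (\<lambda>c. a * x c) = (\<lambda>c. a * ending_paths n k x c :: 'a::mult_zero)"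
  by (auto simp: ending_paths_def)

lemma finite_supp_ending_paths: "finite (supp r) \<Longrightarrow> finite (supp (ending_paths n k r))"
proof -
  have "supp (ending_paths n k r) \<subseteq> (\<lambda>w. (start_v n k w, w)) ` supp r"
    by (auto simp: supp_def ending_paths_def split: if_splits)
  moreover assume "finite (supp r)"
  ultimately show ?thesis
    by (simp add: finite_subset)
qed

lemma finite_supp_ending_words: "finite (supp x) \<Longrightarrow> finite (supp (ending_words n x k))"
proof -
  assume "finite (supp x)"
  moreover have "supp (ending_words n x k) \<subseteq> snd ` supp x"
    by (auto simp: ending_words_def supp_def image_iff)
  ultimately show ?thesis by (rule finite_surj)
qed

lemma H_rels_cases:
  fixes s :: "nat \<times> letter list \<Rightarrow> 'a::comm_ring_1"
  assumes "s \<in> H_rels n (\<lambda>_. 0) \<beta>" and beta: "\<forall>i<n. \<beta> i = -1"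
  obtains i a b where "s = (\<lambda>c. vec (i, a) c + vec (i, b) c)"
    "(\<lambda>w. vec a w + vec b w :: 'a) \<in> R_rels" "deg a = deg b" "a \<noteq> b"
proof -
  from assms(1) consider
      (up) i where "i < n"
        "s = (\<lambda>c. vec (i, [D,U,U]) c - 0 * vec (i, [U,D,U]) c - \<beta> i * vec (i, [U,U,D]) c)"
    | (down) i where "i < n"
        "s = (\<lambda>c. vec ((i+1) mod n, [D,D,U]) c - 0 * vec ((i+1) mod n, [D,U,D]) c
                   - \<beta> i * vec ((i+1) mod n, [U,D,D]) c)"
    unfolding H_rels_def by blast
  then show thesis
  proof cases
    case up
    then show ?thesis
      using beta by (intro that[of i "[D,U,U]" "[U,U,D]"]) (auto simp: R_rels_def)
  next
    case down
    then show ?thesis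
      using beta by (intro that[of "(i+1) mod n" "[D,D,U]" "[U,D,D]"]) (auto simp: R_rels_def)
  qed
qed

lemma ending_words_H_rel:
  fixes s :: "nat \<times> letter list \<Rightarrow> 'b::comm_ring_1"
  assumes "s \<in> H_rels n (\<lambda>_. 0) \<beta>" and "\<forall>i<n. \<beta> i = -1"
  shows "ending_words n s k \<in> I_R"
proof -
  obtain i a b where s: "s = (\<lambda>c. vec (i, a) c + vec (i, b) c)"
    and rel: "(\<lambda>w. vec a w + vec b w :: 'b) \<in> R_rels" and "deg a = deg b" "a \<noteq> b"
    using H_rels_cases[OF assms] .
  then have "ending_words n s k = (if start_v n k a = i then (\<lambda>w. vec a w + vec b w) else (\<lambda>_. 0))"
    by (intro ext) (auto simp: ending_words_def start_v_def vec_def)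
  then show ?thesis
    using rel by (simp add: I_R_def ideal_gen.gen ideal_gen.zero)
qed

section \<open>Roots of unity and the elements w # f_k\<close>

definition word_fi :: "nat \<Rightarrow> 'a::field \<Rightarrow> letter list \<Rightarrow> nat \<Rightarrow> letter list \<times> nat \<Rightarrow> 'a" where
  "word_fi n \<xi> w k = tens (vec w) (fG n \<xi> k)"

lemma word_fi_apply: "word_fi n \<xi> w k (v, j) = (if v = w then fG n \<xi> k j else 0)"
  by (simp add: word_fi_def tens_def vec_def)

lemma fi_eq_word_fi: "fi n \<xi> i = word_fi n \<xi> [] i"
  by (simp add: fi_def word_fi_def)

lemma supp_word_fi: "supp (word_fi n \<xi> w k) \<subseteq> {w} \<times> {..<n}"
  by (auto simp: supp_def word_fi_apply fG_def split: if_splits)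

lemma word_fi_in_SG: "word_fi n \<xi> w k \<in> SG n"
  using finite_subset[OF supp_word_fi] by (auto simp: SG_def supp_def word_fi_apply fG_def)

lemma sum_if_eq_add_mod:
  assumes "j < n" "l < n"
  shows "(\<Sum>k<n. if l = (j + k) mod n then g k else 0) = g (nat ((int l - int j) mod int n))"
proof -
  define k0 where "k0 = nat ((int l - int j) mod int n)"
  have int_k0: "int k0 = (int l - int j) mod int n"
    using assms by (simp add: k0_def)
  have "l = (j + k) mod n \<longleftrightarrow> k = k0" if "k < n" for k
  proof -
    have "l = (j + k) mod n \<longleftrightarrow> int l = (int j + int k) mod int n"
      by (metis of_nat_add of_nat_eq_iff zmod_int)
    also have "\<dots> \<longleftrightarrow> int l mod int n = (int j + int k) mod int n"
      using assms(2) by simp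
    also have "\<dots> \<longleftrightarrow> int k mod int n = (int l - int j) mod int n"
      by (simp add: mod_eq_dvd_iff dvd_diff_commute algebra_simps)
    finally show ?thesis
      using that by (simp flip: int_k0)
  qed
  then have "(\<Sum>k<n. if l = (j + k) mod n then g k else 0) = (\<Sum>k<n. if k = k0 then g k else 0)"
    by (intro sum.cong) auto
  also have "\<dots> = g k0"
    using assms by (simp add: k0_def nat_less_iff)
  finally show ?thesis by (simp add: k0_def)
qed

locale primitive_nth_root =
  fixes n :: nat and \<xi> :: "'a::field_char_0"
  assumes n_pos: "0 < n" and prim: "primitive_root n \<xi>"
begin

lemma root_pow_n: "\<xi> ^ n = 1"
  using prim by (simp add: primitive_root_def)

lemma root_nonzero: "\<xi> \<noteq> 0"
  using root_pow_n n_pos by (metis power_0_left less_not_refl3 zero_neq_one)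

lemma of_nat_n_nonzero: "(of_nat n :: 'a) \<noteq> 0"
  using n_pos by simp

lemma root_powi_add: "\<xi> powi (a + b) = \<xi> powi a * \<xi> powi b"
  by (simp add: power_int_add root_nonzero)

lemma root_powi_mod: "\<xi> powi (e mod int n) = \<xi> powi e"
proof -
  have "\<xi> powi e = \<xi> powi (e mod int n) * (\<xi> ^ n) powi (e div int n)"
    by (metis root_powi_add power_int_mult power_int_of_nat mod_mult_div_eq)
  then show ?thesis by (simp add: root_pow_n)
qed

lemma root_powi_cong: "a mod int n = b mod int n \<Longrightarrow> \<xi> powi a = \<xi> powi b"
  by (metis root_powi_mod)

lemma root_powi_eq_1_iff: "\<xi> powi e = 1 \<longleftrightarrow> int n dvd e"
proof
  assume e: "\<xi> powi e = 1"
  have "\<xi> ^ nat (e mod int n) = 1"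
    using n_pos e by (simp add: root_powi_mod flip: power_int_of_nat)
  moreover have "nat (e mod int n) < n"
    using n_pos by (simp add: nat_less_iff)
  ultimately have "\<not> 0 < nat (e mod int n)"
    using prim by (auto simp: primitive_root_def)
  moreover have "0 \<le> e mod int n"
    using n_pos by simp
  ultimately show "int n dvd e"
    by (simp add: dvd_eq_mod_eq_0)
next
  assume "int n dvd e"
  then obtain k where "e = int n * k" by blast
  then show "\<xi> powi e = 1"
    by (simp add: power_int_mult power_int_of_nat root_pow_n)
qed

lemma sum_root_powers: "(\<Sum>j<n. \<xi> powi (int j * e)) = (if int n dvd e then of_nat n else 0)"
proof (cases "int n dvd e")
  case True
  then have "\<xi> powi (int j * e) = 1" for j by (simp add: root_powi_eq_1_iff)
  then show ?thesis using True by simp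
next
  case False
  have "(\<Sum>j<n. \<xi> powi (int j * e)) = (\<Sum>j<n. (\<xi> powi e) ^ j)"
    by (intro sum.cong refl) (simp add: power_int_mult mult.commute)
  also have "\<dots> = ((\<xi> powi e) ^ n - 1) / (\<xi> powi e - 1)"
    using False root_powi_eq_1_iff by (intro geometric_sum) simp
  also have "(\<xi> powi e) ^ n = 1"
    by (simp add: root_powi_eq_1_iff flip: power_int_mult power_int_of_nat)
  finally show ?thesis using False by simp
qed

lemma act_coeff_eq_powi: "act_coeff \<xi> j w = \<xi> powi (int j * deg w)"
proof -
  have "act_coeff \<xi> j w = \<xi> powi int (j * cnt U w) * \<xi> powi (- int (j * cnt D w))"
    by (simp add: act_coeff_def power_int_minus power_int_inverse flip: power_int_of_nat of_nat_mult)
  also have "\<dots> = \<xi> powi (int j * deg w)"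
    by (simp add: root_powi_add[symmetric] deg_def algebra_simps)
  finally show ?thesis .
qed

lemma basis_coeff_skew_mult:
  "basis_coeff (skew_mult n \<xi>) (v, j) (w, k) c =
     (if c = (v @ w, (j + k) mod n) then \<xi> powi (int j * deg w) else 0)"
  by (auto simp: basis_coeff_def skew_mult_def act_coeff_eq_powi)

lemma fG_eq_powi: "fG n \<xi> k j = (if j < n then \<xi> powi (int k * int j) / of_nat n else 0)"
  by (simp add: fG_def flip: power_int_of_nat)

lemma fsumG_eq: "fsumG n \<xi> j = (if j = 0 then 1 else 0)"
proof (cases "j < n")
  case True
  have "fsumG n \<xi> j = (\<Sum>i<n. \<xi> powi (int i * int j)) / of_nat n"
    using True by (simp add: fsumG_def fG_eq_powi sum_divide_distrib)
  also have "\<dots> = (if j = 0 then 1 else 0)"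
    using True of_nat_n_nonzero by (auto simp: sum_root_powers zdvd_not_zless)
  finally show ?thesis .
qed (use n_pos in \<open>simp add: fsumG_def fG_def\<close>)

lemma tens_fsumG: "tens (vec w) (fsumG n \<xi>) = vec (w, 0)"
  by (rule ext) (auto simp: tens_def fsumG_eq vec_def split: if_splits)

lemma ff_eq_one_skew: "ff n \<xi> = one_skew"
  by (simp add: ff_def one_skew_def tens_fsumG)

lemma u_f_eq: "u_f n \<xi> = vec ([U], 0)"
  by (simp add: u_f_def tens_fsumG)

lemma d_f_eq: "d_f n \<xi> = vec ([D], 0)"
  by (simp add: d_f_def tens_fsumG)

lemma vec_eq_sum_word_fi: "vec (w, 0) = (\<lambda>c. \<Sum>k<n. word_fi n \<xi> w k c)"
  by (rule ext) (simp add: word_fi_def tens_def fsumG_def sum_distrib_left flip: tens_fsumG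
      split: prod.splits)

lemma int_step: "int (step n i a) = (int i + deg [a]) mod int n"
proof (cases a)
  case D
  have "(int i + int n - 1) mod int n = (int i - 1) mod int n"
    by (metis add_diff_eq diff_add_eq mod_add_self2)
  then show ?thesis using D n_pos by (simp add: step_def zmod_int of_nat_diff)
qed (simp add: step_def zmod_int add.commute)

lemma step_less: "step n i a < n"
  using n_pos by (cases a) (simp_all add: step_def)

lemma int_end_v: "i < n \<Longrightarrow> int (end_v n i w) = (int i + deg w) mod int n"
proof (induction w arbitrary: i)
  case (Cons a w)
  have "int (end_v n i (a # w)) = (int (step n i a) + deg w) mod int n"
    by (simp add: end_v_Cons Cons.IH step_less)
  also have "\<dots> = (int i + deg (a # w)) mod int n"
    by (simp add: int_step mod_add_left_eq) (cases a; simp add: algebra_simps)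
  finally show ?case .
qed simp

lemma end_v_less: "i < n \<Longrightarrow> end_v n i w < n"
  using int_end_v n_pos by (metis of_nat_less_iff of_nat_0_less_iff pos_mod_bound)

lemma start_v_less: "start_v n k w < n"
  using n_pos by (simp add: start_v_def nat_less_iff)

lemma int_start_v: "int (start_v n k w) = (int k - deg w) mod int n"
  using n_pos by (simp add: start_v_def)

lemma end_v_start_v: "k < n \<Longrightarrow> end_v n (start_v n k w) w = k"
proof -
  assume k: "k < n"
  have "int (end_v n (start_v n k w) w) = ((int k - deg w) mod int n + deg w) mod int n"
    by (simp add: int_end_v[OF start_v_less] int_start_v)
  also have "\<dots> = int k" using k by (simp add: mod_add_left_eq)
  finally show ?thesis by simp
qed

lemma start_v_end_v: "i < n \<Longrightarrow> start_v n (end_v n i w) w = i"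
proof -
  assume i: "i < n"
  have "int (start_v n (end_v n i w) w) = ((int i + deg w) mod int n - deg w) mod int n"
    by (simp add: int_start_v int_end_v[OF i])
  also have "\<dots> = int i" using i by (simp add: mod_diff_left_eq)
  finally show ?thesis by simp
qed

lemma start_v_eq_iff: "i < n \<Longrightarrow> k < n \<Longrightarrow> start_v n k w = i \<longleftrightarrow> end_v n i w = k"
  using end_v_start_v start_v_end_v by metis

lemma start_v_eq_iff_deg:
  assumes "i < n"
  shows "start_v n k w = i \<longleftrightarrow> deg w mod int n = (int k - int i) mod int n"
proof -
  have "start_v n k w = i \<longleftrightarrow> (int k - deg w) mod int n = int i mod int n"
    using assms by (simp flip: int_start_v)
  also have "\<dots> \<longleftrightarrow> int n dvd (deg w - (int k - int i))"
    by (simp add: mod_eq_dvd_iff dvd_diff_commute algebra_simps)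
  finally show ?thesis by (simp add: mod_eq_dvd_iff)
qed

lemma eq_start_v_iff: "k < n \<Longrightarrow> i = start_v n k w \<longleftrightarrow> i < n \<and> end_v n i w = k"
  using start_v_less start_v_eq_iff by metis

lemma bij_betw_end_v: "bij_betw (\<lambda>i. end_v n i w) {..<n} {..<n}"
  by (rule bij_betw_byWitness[where f' = "\<lambda>k. start_v n k w"])
     (auto simp: start_v_end_v end_v_start_v end_v_less start_v_less)

lemma smul_word_fi_eq_sum:
  "smul n \<xi> (word_fi n \<xi> w a) (word_fi n \<xi> w' b) c =
     (\<Sum>j<n. \<Sum>k<n. fG n \<xi> a j * fG n \<xi> b k * basis_coeff (skew_mult n \<xi>) (w, j) (w', k) c)"
  unfolding smul_def
  by (subst conv_eq_sum_superset[OF _ _ supp_word_fi supp_word_fi])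
     (simp_all add: Times_insert_left sum.reindex inj_on_def word_fi_apply)

lemma sum_twisted_fG_product:
  assumes l: "l < n"
  shows "(\<Sum>j<n. \<Sum>k<n. if l = (j + k) mod n then fG n \<xi> a j * \<xi> powi (int j * d) * fG n \<xi> b k else 0)
       = (if (int a + d) mod int n = int b mod int n then fG n \<xi> b l else 0)"
proof -
  define e where "e = int a + d - int b"
  have "(\<Sum>j<n. \<Sum>k<n. if l = (j + k) mod n then fG n \<xi> a j * \<xi> powi (int j * d) * fG n \<xi> b k else 0)
      = (\<Sum>j<n. fG n \<xi> a j * \<xi> powi (int j * d) * fG n \<xi> b (nat ((int l - int j) mod int n)))"
    using l by (intro sum.cong refl sum_if_eq_add_mod) simp_all
  also have "\<dots> = (\<Sum>j<n. \<xi> powi (int b * int l) / (of_nat n * of_nat n) * \<xi> powi (int j * e))"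
  proof (intro sum.cong refl)
    fix j assume "j \<in> {..<n}"
    have "nat ((int l - int j) mod int n) < n"
      using n_pos by (simp add: nat_less_iff)
    moreover have "\<xi> powi (int b * int (nat ((int l - int j) mod int n))) = \<xi> powi (int b * (int l - int j))"
      using n_pos by (intro root_powi_cong) (simp add: mod_mult_right_eq)
    moreover have "\<xi> powi (int a * int j) * \<xi> powi (int j * d) * \<xi> powi (int b * (int l - int j))
        = \<xi> powi (int b * int l) * \<xi> powi (int j * e)"
      by (simp only: root_powi_add[symmetric]) (simp add: e_def algebra_simps)
    ultimately show "fG n \<xi> a j * \<xi> powi (int j * d) * fG n \<xi> b (nat ((int l - int j) mod int n))
        = \<xi> powi (int b * int l) / (of_nat n * of_nat n) * \<xi> powi (int j * e)"
      using \<open>j \<in> {..<n}\<close> n_pos by (simp add: fG_eq_powi field_simps)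
  qed
  also have "\<dots> = \<xi> powi (int b * int l) / (of_nat n * of_nat n) * (if int n dvd e then of_nat n else 0)"
    by (simp only: sum_distrib_left[symmetric] sum_root_powers)
  also have "int n dvd e \<longleftrightarrow> (int a + d) mod int n = int b mod int n"
    by (simp add: e_def mod_eq_dvd_iff)
  finally show ?thesis
    using l of_nat_n_nonzero by (simp add: fG_eq_powi)
qed

lemma mult_word_fi:
  "smul n \<xi> (word_fi n \<xi> w a) (word_fi n \<xi> w' b) =
     (if (int a + deg w') mod int n = int b mod int n then word_fi n \<xi> (w @ w') b else (\<lambda>_. 0))"
proof
  fix c :: "letter list \<times> nat"
  obtain v l where c: "c = (v, l)" by force
  show "smul n \<xi> (word_fi n \<xi> w a) (word_fi n \<xi> w' b) c =
     (if (int a + deg w') mod int n = int b mod int n then word_fi n \<xi> (w @ w') b else (\<lambda>_. 0)) c"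
  proof (cases "v = w @ w' \<and> l < n")
    case True
    then have "smul n \<xi> (word_fi n \<xi> w a) (word_fi n \<xi> w' b) c
      = (\<Sum>j<n. \<Sum>k<n. if l = (j + k) mod n then fG n \<xi> a j * \<xi> powi (int j * deg w') * fG n \<xi> b k else 0)"
      unfolding smul_word_fi_eq_sum by (intro sum.cong refl) (auto simp: basis_coeff_skew_mult c)
    then show ?thesis
      using True by (simp add: sum_twisted_fG_product c word_fi_apply)
  next
    case False
    then have "basis_coeff (skew_mult n \<xi>) (w, j) (w', k) c = 0" for j k
      using mod_less_divisor[OF n_pos, of "j + k"] by (auto simp: basis_coeff_skew_mult c)
    then have "smul n \<xi> (word_fi n \<xi> w a) (word_fi n \<xi> w' b) c = 0"
      by (simp add: smul_word_fi_eq_sum)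
    then show ?thesis
      using False by (auto simp: c word_fi_apply fG_def)
  qed
qed

lemma one_skew_mult:
  assumes "y \<in> SG n"
  shows "smul n \<xi> one_skew y = y"
proof
  fix c
  have f: "finite (supp y)" using assms by (simp add: SG_def)
  have "smul n \<xi> one_skew y c = (\<Sum>t\<in>supp y. y t * (if t = c then 1 else 0))"
    unfolding smul_def one_skew_def conv_vec_left[OF f]
  proof (intro sum.cong refl)
    fix t assume "t \<in> supp y"
    then show "y t * basis_coeff (skew_mult n \<xi>) ([], 0) t c = y t * (if t = c then 1 else 0)"
      using assms by (cases t) (auto simp: SG_def supp_def basis_coeff_skew_mult)
  qed
  then show "smul n \<xi> one_skew y c = y c"
    using sum_mult_delta[OF f subset_refl, where P = True] by simp
qed

lemma mult_one_skew:
  assumes "y \<in> SG n"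
  shows "smul n \<xi> y one_skew = y"
proof
  fix c
  have f: "finite (supp y)" using assms by (simp add: SG_def)
  have "smul n \<xi> y one_skew c = (\<Sum>t\<in>supp y. y t * (if t = c then 1 else 0))"
    unfolding smul_def one_skew_def conv_vec_right[OF f]
  proof (intro sum.cong refl)
    fix t assume "t \<in> supp y"
    then show "y t * basis_coeff (skew_mult n \<xi>) t ([], 0) c = y t * (if t = c then 1 else 0)"
      using assms by (cases t) (auto simp: SG_def supp_def basis_coeff_skew_mult)
  qed
  then show "smul n \<xi> y one_skew c = y c"
    using sum_mult_delta[OF f subset_refl, where P = True] by simp
qed

lemma ff_mult_ff_eq: "y \<in> SG n \<Longrightarrow> smul n \<xi> (smul n \<xi> (ff n \<xi>) y) (ff n \<xi>) = y"
  by (simp add: ff_eq_one_skew one_skew_mult mult_one_skew)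

section \<open>The map psi\<close>

lemma arrow_img_eq: "arrow_img n \<xi> i a = word_fi n \<xi> [a] (step n i a)"
proof
  fix c
  have finite_supp: "finite (supp (word_fi n \<xi> w k))" for w k
    using finite_subset[OF supp_word_fi] by simp
  show "arrow_img n \<xi> i a c = word_fi n \<xi> [a] (step n i a) c"
  proof (cases a)
    case U
    have step_iff: "(int i + 1) mod int n = int k \<longleftrightarrow> k = step n i a" if "k < n" for k
      using that U int_step[of i a] step_less[of i a] by auto
    have "arrow_img n \<xi> i a c = conv (skew_mult n \<xi>) (word_fi n \<xi> [] i) (\<lambda>c. \<Sum>k<n. 1 * word_fi n \<xi> [U] k c) c"
      using U by (simp add: arrow_img_def fi_eq_word_fi u_f_eq smul_def vec_eq_sum_word_fi)
    also have "\<dots> = (\<Sum>k<n. 1 * smul n \<xi> (word_fi n \<xi> [] i) (word_fi n \<xi> [U] k) c)"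
      unfolding smul_def by (rule conv_sum_right[OF _ _ supp_word_fi finite_supp]) simp_all
    also have "\<dots> = (\<Sum>k<n. if k = step n i a then word_fi n \<xi> [U] k c else 0)"
      by (intro sum.cong refl) (simp add: mult_word_fi step_iff)
    finally show ?thesis using U step_less[of i a] by simp
  next
    case D
    have "arrow_img n \<xi> i a c = conv (skew_mult n \<xi>) (\<lambda>c. \<Sum>k<n. 1 * word_fi n \<xi> [D] k c) (word_fi n \<xi> [] (step n i a)) c"
      using D by (simp add: arrow_img_def fi_eq_word_fi d_f_eq smul_def step_def vec_eq_sum_word_fi)
    also have "\<dots> = (\<Sum>k<n. 1 * smul n \<xi> (word_fi n \<xi> [D] k) (word_fi n \<xi> [] (step n i a)) c)"
      unfolding smul_def by (rule conv_sum_left[OF _ _ supp_word_fi finite_supp]) simp_all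
    also have "\<dots> = (\<Sum>k<n. if k = step n i a then word_fi n \<xi> [D] (step n i a) c else 0)"
      using step_less[of i a] by (intro sum.cong refl) (auto simp: mult_word_fi)
    finally show ?thesis using D step_less[of i a] by simp
  qed
qed

lemma arrows_img_eq: "w \<noteq> [] \<Longrightarrow> arrows_img n \<xi> i w = word_fi n \<xi> w (end_v n i w)"
proof (induction w arbitrary: i)
  case (Cons a w)
  show ?case
  proof (cases "w = []")
    case True
    then show ?thesis by (simp add: arrow_img_eq mult_one_skew word_fi_in_SG end_v_Cons)
  next
    case False
    have "arrows_img n \<xi> i (a # w)
        = smul n \<xi> (word_fi n \<xi> [a] (step n i a)) (word_fi n \<xi> w (end_v n (step n i a) w))"
      using Cons.IH[OF False] by (simp add: arrow_img_eq)
    also have "\<dots> = word_fi n \<xi> ([a] @ w) (end_v n (step n i a) w)"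
      by (simp add: mult_word_fi int_end_v step_less mod_add_left_eq)
    finally show ?thesis by (simp add: end_v_Cons)
  qed
qed simp

lemma psi_basis_eq: "psi_basis n \<xi> (i, w) = word_fi n \<xi> w (end_v n i w)"
  by (simp add: psi_basis_def fi_eq_word_fi arrows_img_eq)

lemma supp_psi_basis: "supp (psi_basis n \<xi> p) \<subseteq> {snd p} \<times> {..<n}"
  by (metis psi_basis_eq supp_word_fi prod.collapse)

lemma psi_eq_lin_ext: "psi n \<xi> = lin_ext (psi_basis n \<xi>)"
  by (intro ext) (simp add: psi_def lin_ext_def)

lemma end_v_compatible_iff:
  assumes "i < n" "j < n"
  shows "(int (end_v n i u) + deg v) mod int n = int (end_v n j v) mod int n \<longleftrightarrow> end_v n i u = j"
proof -
  have "(int (end_v n i u) + deg v) mod int n = int (end_v n j v) mod int n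
      \<longleftrightarrow> (int (end_v n i u) + deg v) mod int n = (int j + deg v) mod int n"
    using assms(2) by (simp add: int_end_v)
  also have "\<dots> \<longleftrightarrow> int (end_v n i u) mod int n = int j mod int n"
    by (simp add: mod_eq_dvd_iff)
  finally show ?thesis
    using assms end_v_less by simp
qed

lemma psi_basis_mult_pair:
  assumes "i < n" "j < n"
  shows "psi n \<xi> (conv (path_mult n) (vec (i, u)) (vec (j, v))) =
           smul n \<xi> (psi_basis n \<xi> (i, u)) (psi_basis n \<xi> (j, v))"
proof (cases "end_v n i u = j")
  case True
  then have "conv (path_mult n) (vec (i, u)) (vec (j, v)) = (vec (i, u @ v) :: _ \<Rightarrow> 'a)"
    by (intro ext, simp only: conv_vec_vec basis_coeff_path_mult) (auto simp: vec_def)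
  moreover have "(int (end_v n i u) + deg v) mod int n = int (end_v n j v) mod int n"
    using True end_v_compatible_iff[OF assms] by blast
  ultimately show ?thesis
    using True by (simp add: psi_eq_lin_ext lin_ext_vec psi_basis_eq mult_word_fi end_v_append)
next
  case False
  then have "conv (path_mult n) (vec (i, u)) (vec (j, v)) = ((\<lambda>_. 0) :: _ \<Rightarrow> 'a)"
    by (intro ext, simp only: conv_vec_vec basis_coeff_path_mult) auto
  then show ?thesis
    using False assms by (simp add: psi_eq_lin_ext lin_ext_zero psi_basis_eq mult_word_fi end_v_compatible_iff)
qed

lemma psi_basis_mult:
  "fst a < n \<Longrightarrow> fst b < n \<Longrightarrow>
     psi n \<xi> (conv (path_mult n) (vec a) (vec b)) = smul n \<xi> (psi_basis n \<xi> a) (psi_basis n \<xi> b)"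
  using psi_basis_mult_pair by (cases a, cases b) simp

lemma psi_mult:
  assumes x: "x \<in> PQ n" and y: "y \<in> PQ n"
  shows "psi n \<xi> (conv (path_mult n) x y) = smul n \<xi> (psi n \<xi> x) (psi n \<xi> y)"
proof
  fix c
  define A B where "A = supp x" and "B = supp y"
  have fin: "finite A" "finite B"
    using x y by (simp_all add: A_def B_def PQ_finite_supp)
  define Z where "Z p = (conv (path_mult n) (vec (fst p)) (vec (snd p)) :: nat \<times> letter list \<Rightarrow> 'a)"
    for p :: "(nat \<times> letter list) \<times> (nat \<times> letter list)"
  define T where "T = (\<lambda>p. (fst (fst p), snd (fst p) @ snd (snd p))) ` (A \<times> B)"
  have supp_Z: "supp (Z p) \<subseteq> T" if "p \<in> A \<times> B" for p
    using that by (auto simp: Z_def T_def supp_def conv_vec_vec basis_coeff_path_mult split: if_splits)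
  have xy: "conv (path_mult n) x y = (\<lambda>c. \<Sum>p\<in>A \<times> B. x (fst p) * y (snd p) * Z p c)"
  proof
    fix c'
    have "conv (path_mult n) x y c'
        = conv (path_mult n) (\<lambda>c. \<Sum>a\<in>A. x a * vec a c) (\<lambda>c. \<Sum>b\<in>B. y b * vec b c) c'"
      using fun_eq_sum_vec[of x] fun_eq_sum_vec[of y] fin by (simp add: A_def B_def)
    also have "\<dots> = (\<Sum>p\<in>A \<times> B. x (fst p) * y (snd p) * Z p c')"
      by (simp add: conv_sum_sum[OF fin fin] supp_vec sum.cartesian_product Z_def case_prod_beta)
    finally show "conv (path_mult n) x y c' = (\<Sum>p\<in>A \<times> B. x (fst p) * y (snd p) * Z p c')" .
  qed
  have "psi n \<xi> (conv (path_mult n) x y) c = (\<Sum>p\<in>A \<times> B. x (fst p) * y (snd p) * psi n \<xi> (Z p) c)"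
    unfolding xy psi_eq_lin_ext
    by (rule lin_ext_sum[OF _ _ supp_Z]) (use fin in \<open>simp_all add: T_def\<close>)
  also have "\<dots> = (\<Sum>p\<in>A \<times> B. x (fst p) * y (snd p) * smul n \<xi> (psi_basis n \<xi> (fst p)) (psi_basis n \<xi> (snd p)) c)"
    using PQ_supp_less[OF x] PQ_supp_less[OF y]
    by (intro sum.cong refl) (auto simp: Z_def A_def B_def psi_basis_mult)
  also have "\<dots> = smul n \<xi> (\<lambda>c. \<Sum>a\<in>A. x a * psi_basis n \<xi> a c) (\<lambda>c. \<Sum>b\<in>B. y b * psi_basis n \<xi> b c) c"
    unfolding smul_def
    using fin supp_psi_basis
    by (subst conv_sum_sum[OF fin, of "snd ` A \<times> {..<n}" "snd ` B \<times> {..<n}"])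
       (fastforce simp: sum.cartesian_product case_prod_beta)+
  finally show "psi n \<xi> (conv (path_mult n) x y) c = smul n \<xi> (psi n \<xi> x) (psi n \<xi> y) c"
    by (simp add: psi_def A_def B_def)
qed

lemma psi_in_SG:
  assumes "finite (supp x)"
  shows "psi n \<xi> x \<in> SG n"
proof -
  have supp_psi: "supp (psi n \<xi> x) \<subseteq> snd ` supp x \<times> {..<n}"
    unfolding psi_def using supp_psi_basis by (intro supp_sum_subset) fastforce
  then have "finite (supp (psi n \<xi> x))"
    using assms finite_subset by blast
  with supp_psi show ?thesis by (auto simp: SG_def supp_def)
qed

lemma psi_apply:
  assumes x: "x \<in> PQ n"
  shows "psi n \<xi> x (w, j) = (\<Sum>k<n. ending_words n x k w * fG n \<xi> k j)"
proof -
  have "psi n \<xi> x (w, j) = (\<Sum>b\<in>supp x \<union> {..<n} \<times> {w}. x b * psi_basis n \<xi> b (w, j))"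
    unfolding psi_eq_lin_ext using PQ_finite_supp[OF x] by (intro lin_ext_eq_sum_superset) auto
  also have "\<dots> = (\<Sum>b\<in>{..<n} \<times> {w}. x b * psi_basis n \<xi> b (w, j))"
    using PQ_finite_supp[OF x] PQ_supp_less[OF x]
    by (intro sum.mono_neutral_right) (auto simp: psi_basis_eq word_fi_apply supp_def split: if_splits)
  also have "\<dots> = (\<Sum>i<n. x (i, w) * fG n \<xi> (end_v n i w) j)"
    by (rule sum.reindex_cong[of "\<lambda>i. (i, w)"]) (auto simp: inj_on_def psi_basis_eq word_fi_apply)
  also have "\<dots> = (\<Sum>i<n. ending_words n x (end_v n i w) w * fG n \<xi> (end_v n i w) j)"
    by (intro sum.cong refl) (simp add: ending_words_def start_v_end_v)
  also have "\<dots> = (\<Sum>k<n. ending_words n x k w * fG n \<xi> k j)"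
    by (rule sum.reindex_bij_betw[OF bij_betw_end_v])
  finally show ?thesis .
qed

lemma sum_root_powers_orthogonal:
  assumes "k < n" "l < n"
  shows "(\<Sum>j<n. \<xi> powi (int l * int j) * \<xi> powi (- (int k * int j))) = (if l = k then of_nat n else 0)"
proof -
  have "(\<Sum>j<n. \<xi> powi (int l * int j) * \<xi> powi (- (int k * int j))) = (\<Sum>j<n. \<xi> powi (int j * (int l - int k)))"
    by (intro sum.cong refl) (simp add: root_powi_add[symmetric] algebra_simps)
  moreover have "int n dvd int l - int k \<longleftrightarrow> int l mod int n = int k mod int n"
    by (simp add: mod_eq_dvd_iff)
  ultimately show ?thesis
    using assms by (simp add: sum_root_powers)
qed

lemma fourier_inversion:
  assumes "k < n"
  shows "(\<Sum>j<n. \<xi> powi (- (int k * int j)) * (\<Sum>l<n. c l * fG n \<xi> l j)) = c k"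
proof -
  have "(\<Sum>j<n. \<xi> powi (- (int k * int j)) * (\<Sum>l<n. c l * fG n \<xi> l j))
      = (\<Sum>j<n. \<Sum>l<n. c l * (\<xi> powi (int l * int j) * \<xi> powi (- (int k * int j)) / of_nat n))"
    by (simp add: fG_eq_powi sum_distrib_left mult_ac)
  also have "\<dots> = (\<Sum>l<n. c l * ((\<Sum>j<n. \<xi> powi (int l * int j) * \<xi> powi (- (int k * int j))) / of_nat n))"
    by (subst sum.swap) (simp add: sum_distrib_left sum_divide_distrib)
  also have "\<dots> = (\<Sum>l<n. c l * (if l = k then 1 else 0))"
    using assms of_nat_n_nonzero by (intro sum.cong refl) (simp add: sum_root_powers_orthogonal)
  finally show ?thesis
    using assms by (simp add: if_distrib[of "\<lambda>x. _ * x"] cong: if_cong)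
qed

lemma fourier_inversion':
  assumes "j < n"
  shows "(\<Sum>k<n. (\<Sum>l<n. \<xi> powi (- (int k * int l)) * c l) * fG n \<xi> k j) = c j"
proof -
  have "(\<Sum>k<n. (\<Sum>l<n. \<xi> powi (- (int k * int l)) * c l) * fG n \<xi> k j)
      = (\<Sum>k<n. \<Sum>l<n. c l * (\<xi> powi (int j * int k) * \<xi> powi (- (int l * int k)) / of_nat n))"
    using assms by (simp add: fG_eq_powi sum_distrib_left sum_distrib_right sum_divide_distrib mult_ac)
  also have "\<dots> = (\<Sum>l<n. c l * ((\<Sum>k<n. \<xi> powi (int j * int k) * \<xi> powi (- (int l * int k))) / of_nat n))"
    by (subst sum.swap) (simp add: sum_distrib_left sum_divide_distrib)
  also have "\<dots> = (\<Sum>l<n. c l * (if j = l then 1 else 0))"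
    using assms of_nat_n_nonzero by (intro sum.cong refl) (simp add: sum_root_powers_orthogonal)
  finally show ?thesis
    using assms by (simp add: if_distrib[of "\<lambda>x. _ * x"] cong: if_cong)
qed

lemma psi_in_J_skew_iff:
  assumes x: "x \<in> PQ n"
  shows "psi n \<xi> x \<in> J_skew \<longleftrightarrow> (\<forall>k<n. ending_words n x k \<in> I_R)"
proof
  assume J: "psi n \<xi> x \<in> J_skew"
  show "\<forall>k<n. ending_words n x k \<in> I_R"
  proof (intro allI impI)
    fix k assume k: "k < n"
    have "ending_words n x k = (\<lambda>w. \<Sum>j<n. \<xi> powi (- (int k * int j)) * psi n \<xi> x (w, j))"
      by (simp add: psi_apply[OF x] fourier_inversion[OF k])
    also have "\<dots> \<in> I_R"
      using J unfolding I_R_def J_skew_def by (intro ideal_gen_sum ideal_gen.smult) auto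
    finally show "ending_words n x k \<in> I_R" .
  qed
next
  assume E: "\<forall>k<n. ending_words n x k \<in> I_R"
  have "(\<lambda>w. psi n \<xi> x (w, j)) \<in> I_R" for j
  proof -
    have "(\<lambda>w. psi n \<xi> x (w, j)) = (\<lambda>w. \<Sum>k<n. fG n \<xi> k j * ending_words n x k w)"
      by (simp add: psi_apply[OF x] mult.commute)
    also have "\<dots> \<in> I_R"
      using E unfolding I_R_def by (intro ideal_gen_sum ideal_gen.smult) auto
    finally show ?thesis .
  qed
  then show "psi n \<xi> x \<in> J_skew"
    by (simp add: J_skew_def)
qed

section \<open>The kernel of psi\<close>

lemma ending_words_conv_vec_left:
  assumes x: "finite (supp x)" and i0: "i0 < n" and k: "k < n"
  shows "ending_words n (conv (path_mult n) (vec (i0, u)) x) k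
       = conv free_mult (vec u) (deg_proj n (int k - int (end_v n i0 u)) (ending_words n x k))"
    (is "?lhs = conv free_mult (vec u) ?r")
proof
  fix w
  have "finite (supp ?r)"
    by (rule finite_subset[OF supp_deg_proj finite_supp_ending_words[OF x]])
  then have rhs: "conv free_mult (vec u) ?r w = (if prefix u w then ?r (drop (length u) w) else 0)"
    by (rule conv_free_vec_left)
  have lhs: "?lhs w = (if start_v n k w = i0 \<and> prefix u w then x (end_v n i0 u, drop (length u) w) else 0)"
    by (simp add: ending_words_def conv_path_vec_left[OF x])
  show "?lhs w = conv free_mult (vec u) ?r w"
  proof (cases "prefix u w")
    case True
    then obtain d where w: "w = u @ d"
      by (auto simp: prefix_def)
    have "start_v n k w = i0 \<longleftrightarrow> start_v n k d = end_v n i0 u"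
      using i0 k end_v_less by (simp add: start_v_eq_iff w end_v_append)
    moreover have "start_v n k d = end_v n i0 u \<longleftrightarrow> deg d mod int n = (int k - int (end_v n i0 u)) mod int n"
      using i0 by (simp add: start_v_eq_iff_deg end_v_less)
    ultimately show ?thesis
      unfolding lhs rhs by (auto simp: w deg_proj_def ending_words_def)
  qed (simp add: lhs rhs)
qed

lemma ending_words_conv_vec_right:
  assumes x: "finite (supp x)" and i0: "i0 < n" and k: "k < n"
  shows "ending_words n (conv (path_mult n) x (vec (i0, u))) k
       = (if end_v n i0 u = k then conv free_mult (ending_words n x i0) (vec u) else (\<lambda>_. 0))"
    (is "?lhs = ?rhs")
proof
  fix w
  have rhs: "?rhs w = (if end_v n i0 u = k \<and> suffix u w
                       then ending_words n x i0 (take (length w - length u) w) else 0)"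
    by (simp add: conv_free_vec_right[OF finite_supp_ending_words[OF x]])
  have lhs: "?lhs w = (if suffix u w \<and> end_v n (start_v n k w) (take (length w - length u) w) = i0
                       then x (start_v n k w, take (length w - length u) w) else 0)"
    by (simp add: ending_words_def conv_path_vec_right[OF x])
  show "?lhs w = ?rhs w"
  proof (cases "suffix u w")
    case True
    then obtain v where w: "w = v @ u"
      by (auto simp: suffix_def)
    have end_start: "end_v n (start_v n k w) w = k"
      using k by (rule end_v_start_v)
    show ?thesis
    proof (cases "end_v n i0 u = k")
      case True
      then have "start_v n k w = start_v n i0 v"
        using i0 k by (simp add: start_v_eq_iff start_v_less w end_v_append end_v_start_v)
      then show ?thesis
        using True i0 unfolding lhs rhs by (simp add: w ending_words_def end_v_start_v)
    next
      case False
      then have "end_v n (start_v n k w) v \<noteq> i0"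
        using end_start by (auto simp: w end_v_append)
      then show ?thesis
        using False unfolding lhs by (simp add: w)
    qed
  qed (simp add: lhs rhs)
qed

lemma ending_words_in_I_R:
  assumes "x \<in> H_ideal n (\<lambda>_. 0) \<beta>" and beta: "\<forall>i<n. \<beta> i = -1" and "k < n"
  shows "ending_words n x k \<in> I_R"
  using assms(1,3) unfolding H_ideal_def
proof (induction arbitrary: k rule: ideal_gen.induct)
  case (gen s)
  show ?case by (rule ending_words_H_rel[OF gen.hyps beta])
next
  case zero
  then show ?case by (simp add: ending_words_def I_R_def ideal_gen.zero)
next
  case (add x y)
  then show ?case by (simp add: ending_words_def I_R_def ideal_gen.add)
next
  case (smult x a)
  then show ?case by (simp add: ending_words_def I_R_def ideal_gen.smult)
next
  case (left b x)
  obtain i0 u where b: "b = (i0, u)" by force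
  have "finite (supp x)"
    using left.hyps(2) H_ideal_subset_PQ PQ_finite_supp unfolding H_ideal_def by blast
  then show ?case
    using left deg_proj_in_I_R[OF left.IH] unfolding I_R_def
    by (simp add: b ending_words_conv_vec_left ideal_gen.left)
next
  case (right b x)
  obtain i0 u where b: "b = (i0, u)" by force
  have "finite (supp x)"
    using right.hyps(2) H_ideal_subset_PQ PQ_finite_supp unfolding H_ideal_def by blast
  then show ?case
    using right right.IH[of i0] unfolding I_R_def
    by (simp add: b ending_words_conv_vec_right ideal_gen.right ideal_gen.zero)
qed

lemma ending_paths_vertex_out_of_range: "\<not> i < n \<Longrightarrow> ending_paths n k r (i, w) = 0"
  using start_v_less by (metis ending_paths_apply)

lemma ending_paths_R_rel:
  fixes s :: "letter list \<Rightarrow> 'b::comm_ring_1"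
  assumes "s \<in> R_rels" and beta: "\<forall>i<n. \<beta> i = -1" and k: "k < n"
  shows "ending_paths n k s \<in> H_rels n (\<lambda>_. 0) \<beta>"
  using assms(1) unfolding R_rels_def
proof (elim insertE emptyE)
  assume s: "s = (\<lambda>c. vec [D,D,U] c + vec [U,D,D] c)"
  have "nat ((int k + 1) mod int n) = (k + 1) mod n"
    by (metis of_nat_Suc Suc_eq_plus1 nat_int zmod_int add.commute)
  then have "start_v n k [D,D,U] = (k + 1) mod n" "start_v n k [U,D,D] = (k + 1) mod n"
    by (simp_all add: start_v_def)
  then have "ending_paths n k s = (\<lambda>c. vec ((k+1) mod n, [D,D,U]) c - 0 * vec ((k+1) mod n, [D,U,D]) c
                                       - \<beta> k * vec ((k+1) mod n, [U,D,D]) c)"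
    using beta k by (simp add: s ending_paths_add ending_paths_vec)
  then show ?thesis
    using k unfolding H_rels_def by blast
next
  assume s: "s = (\<lambda>c. vec [D,U,U] c + vec [U,U,D] c)"
  define i where "i = start_v n k [D,U,U]"
  have "start_v n k [U,U,D] = i"
    by (simp add: i_def start_v_def)
  then have "ending_paths n k s = (\<lambda>c. vec (i, [D,U,U]) c - 0 * vec (i, [U,D,U]) c - \<beta> i * vec (i, [U,U,D]) c)"
    using beta start_v_less by (simp add: s i_def ending_paths_add ending_paths_vec)
  then show ?thesis
    using start_v_less unfolding H_rels_def i_def by blast
qed

lemma ending_paths_conv_vec_left:
  assumes r: "finite (supp r)" and k: "k < n"
  shows "ending_paths n k (conv free_mult (vec b) r)
       = (\<lambda>c. \<Sum>i<n. conv (path_mult n) (vec (i, b)) (ending_paths n k r) c)"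
proof
  fix c :: "nat \<times> letter list"
  obtain j v where c: "c = (j, v)" by force
  have "(\<Sum>i<n. conv (path_mult n) (vec (i, b)) (ending_paths n k r) c)
      = (\<Sum>i<n. if i = j then (if prefix b v then ending_paths n k r (end_v n i b, drop (length b) v) else 0) else 0)"
    by (intro sum.cong refl) (auto simp: c conv_path_vec_left[OF finite_supp_ending_paths[OF r]])
  also have "\<dots> = (if j < n \<and> prefix b v then ending_paths n k r (end_v n j b, drop (length b) v) else 0)"
    by simp
  also have "\<dots> = ending_paths n k (conv free_mult (vec b) r) c"
  proof (cases "prefix b v")
    case True
    then obtain d where v: "v = b @ d"
      by (auto simp: prefix_def)
    have "j = start_v n k v \<longleftrightarrow> j < n \<and> end_v n j b = start_v n k d"
      using k by (auto simp: eq_start_v_iff v end_v_append end_v_less)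
    then show ?thesis
      by (auto simp: c v ending_paths_apply conv_free_vec_left[OF r])
  qed (simp add: c ending_paths_apply conv_free_vec_left[OF r])
  finally show "ending_paths n k (conv free_mult (vec b) r) c
      = (\<Sum>i<n. conv (path_mult n) (vec (i, b)) (ending_paths n k r) c)" ..
qed

lemma ending_paths_conv_vec_right:
  fixes r :: "letter list \<Rightarrow> 'b::comm_ring_1"
  assumes r: "finite (supp r)" and k: "k < n"
  shows "ending_paths n k (conv free_mult r (vec b))
       = (\<lambda>c. \<Sum>i | i < n \<and> end_v n i b = k. conv (path_mult n) (ending_paths n i r) (vec (i, b)) c)"
proof
  fix c :: "nat \<times> letter list"
  obtain j v where c: "c = (j, v)" by force
  have filter: "(\<Sum>i | i < n \<and> end_v n i b = k. conv (path_mult n) (ending_paths n i r) (vec (i, b)) c)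
      = (\<Sum>i<n. if end_v n i b = k then conv (path_mult n) (ending_paths n i r) (vec (i, b)) c else 0)"
    by (simp add: sum.inter_filter[symmetric] conj_commute)
  have "ending_paths n k (conv free_mult r (vec b)) c
      = (\<Sum>i<n. if end_v n i b = k then conv (path_mult n) (ending_paths n i r) (vec (i, b)) c else 0)"
  proof (cases "suffix b v \<and> j < n")
    case True
    then obtain v' where v: "v = v' @ b" and j: "j < n"
      by (auto simp: suffix_def)
    have "(\<Sum>i<n. if end_v n i b = k then conv (path_mult n) (ending_paths n i r) (vec (i, b)) c else 0)
        = (\<Sum>i<n. if i = end_v n j v' then (if end_v n i b = k then r v' else 0) else 0)"
      using j True by (intro sum.cong refl)
        (auto simp: c v conv_path_vec_right[OF finite_supp_ending_paths[OF r]] ending_paths_apply start_v_end_v)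
    also have "\<dots> = (if end_v n j v = k then r v' else 0)"
      using j end_v_less by (simp add: v end_v_append)
    also have "\<dots> = ending_paths n k (conv free_mult r (vec b)) c"
      using j k True by (simp add: c v ending_paths_apply conv_free_vec_right[OF r] eq_start_v_iff)
    finally show ?thesis ..
  next
    case False
    then consider "\<not> suffix b v" | "\<not> j < n" by blast
    then show ?thesis
    proof cases
      case 1
      then show ?thesis
        by (simp add: c ending_paths_apply conv_free_vec_right[OF r]
            conv_path_vec_right[OF finite_supp_ending_paths[OF r]] cong: if_cong)
    next
      case 2
      then show ?thesis
        unfolding c ending_paths_vertex_out_of_range[OF 2] conv_path_vec_right[OF finite_supp_ending_paths[OF r]]
        by (simp cong: if_cong)
    qed
  qed
  then show "ending_paths n k (conv free_mult r (vec b)) c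
      = (\<Sum>i | i < n \<and> end_v n i b = k. conv (path_mult n) (ending_paths n i r) (vec (i, b)) c)"
    by (simp only: filter)
qed

lemma ending_paths_in_H_ideal:
  assumes "r \<in> I_R" and beta: "\<forall>i<n. \<beta> i = -1" and "k < n"
  shows "ending_paths n k r \<in> H_ideal n (\<lambda>_. 0) \<beta>"
  using assms(1,3) unfolding I_R_def
proof (induction arbitrary: k rule: ideal_gen.induct)
  case (gen s)
  then show ?case
    using ending_paths_R_rel[OF gen.hyps beta] unfolding H_ideal_def by (simp add: ideal_gen.gen)
next
  case zero
  then show ?case by (simp add: ending_paths_def H_ideal_def ideal_gen.zero)
next
  case (add x y)
  then show ?case by (simp add: ending_paths_add H_ideal_def ideal_gen.add)
next
  case (smult x a)
  then show ?case by (simp add: ending_paths_mult H_ideal_def ideal_gen.smult)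
next
  case (left b x)
  have fin: "finite (supp x)"
    using left.hyps(2) finite_supp_I_R unfolding I_R_def by blast
  show ?case
    using left unfolding ending_paths_conv_vec_left[OF fin left.prems] H_ideal_def
    by (intro ideal_gen_sum ideal_gen.left) auto
next
  case (right b x)
  have fin: "finite (supp x)"
    using right.hyps(2) finite_supp_I_R unfolding I_R_def by blast
  show ?case
    using right unfolding ending_paths_conv_vec_right[OF fin right.prems] H_ideal_def
    by (intro ideal_gen_sum ideal_gen.right) auto
qed

lemma ending_words_ending_paths:
  "k < n \<Longrightarrow> l < n \<Longrightarrow> ending_words n (ending_paths n l r) k = (if l = k then r else (\<lambda>_. 0))"
  by (auto simp: ending_words_def ending_paths_apply intro!: ext) (metis end_v_start_v)

lemma ending_words_sum_ending_paths:
  fixes r :: "nat \<Rightarrow> letter list \<Rightarrow> 'b::comm_ring_1"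
  assumes "k < n"
  shows "ending_words n (\<lambda>c. \<Sum>l<n. ending_paths n l (r l) c) k = r k"
proof
  fix w
  have "ending_words n (\<lambda>c. \<Sum>l<n. ending_paths n l (r l) c) k w
      = (\<Sum>l<n. ending_words n (ending_paths n l (r l)) k w)"
    by (simp add: ending_words_def)
  also have "\<dots> = r k w"
    using assms by (simp add: ending_words_ending_paths if_distrib[of "\<lambda>f. f w"] cong: if_cong)
  finally show "ending_words n (\<lambda>c. \<Sum>l<n. ending_paths n l (r l) c) k w = r k w" .
qed

lemma sum_ending_paths_in_PQ:
  fixes r :: "nat \<Rightarrow> letter list \<Rightarrow> 'b::comm_ring_1"
  assumes "\<And>l. l < n \<Longrightarrow> finite (supp (r l))"
  shows "(\<lambda>c. \<Sum>l<n. ending_paths n l (r l) c) \<in> PQ n"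
proof -
  have "supp (\<lambda>c. \<Sum>l<n. ending_paths n l (r l) c) \<subseteq> (\<Union>l<n. supp (ending_paths n l (r l)))"
    by (auto simp: supp_def dest: sum.not_neutral_contains_not_neutral)
  moreover have "finite (\<Union>l<n. supp (ending_paths n l (r l)))"
    using assms finite_supp_ending_paths by blast
  moreover have "fst p < n" if "p \<in> supp (ending_paths n l (r l))" for p l
    using that start_v_less by (cases p) (auto simp: supp_def ending_paths_apply split: if_splits)
  ultimately show ?thesis
    unfolding PQ_iff by (meson finite_subset subsetD UN_E)
qed

lemma sum_ending_paths_ending_words:
  fixes x :: "nat \<times> letter list \<Rightarrow> 'b::comm_ring_1"
  assumes x: "x \<in> PQ n"
  shows "x = (\<lambda>c. \<Sum>k<n. ending_paths n k (ending_words n x k) c)"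
proof
  fix c :: "nat \<times> letter list"
  obtain i w where c: "c = (i, w)" by force
  show "x c = (\<Sum>k<n. ending_paths n k (ending_words n x k) c)"
  proof (cases "i < n")
    case True
    have "(\<Sum>k<n. ending_paths n k (ending_words n x k) c) = (\<Sum>k<n. if k = end_v n i w then x (i, w) else 0)"
      using True by (intro sum.cong refl) (auto simp: c ending_paths_apply ending_words_def eq_start_v_iff start_v_end_v)
    also have "\<dots> = x c"
      using True end_v_less by (simp add: c start_v_end_v)
    finally show ?thesis ..
  next
    case False
    then have "x (i, w) = 0"
      using x by (auto simp: PQ_iff supp_def)
    then show ?thesis
      using False by (simp add: c ending_paths_vertex_out_of_range)
  qed
qed

lemma H_ideal_iff_ending_words:
  assumes x: "x \<in> PQ n" and beta: "\<forall>i<n. \<beta> i = -1"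
  shows "x \<in> H_ideal n (\<lambda>_. 0) \<beta> \<longleftrightarrow> (\<forall>k<n. ending_words n x k \<in> I_R)"
proof
  assume "\<forall>k<n. ending_words n x k \<in> I_R"
  then have "(\<lambda>c. \<Sum>k<n. ending_paths n k (ending_words n x k) c) \<in> H_ideal n (\<lambda>_. 0) \<beta>"
    unfolding H_ideal_def
    by (intro ideal_gen_sum) (auto simp: ending_paths_in_H_ideal[OF _ beta, unfolded H_ideal_def])
  then show "x \<in> H_ideal n (\<lambda>_. 0) \<beta>"
    using sum_ending_paths_ending_words[OF x] by simp
qed (use ending_words_in_I_R beta in blast)

lemma psi_surj_SG:
  assumes y: "y \<in> SG n"
  shows "\<exists>x\<in>PQ n. psi n \<xi> x = y"
proof -
  define r where "r k = (\<lambda>w. \<Sum>j<n. \<xi> powi (- (int k * int j)) * y (w, j))" for k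
  define x where "x = (\<lambda>c. \<Sum>k<n. ending_paths n k (r k) c)"
  have "supp (r k) \<subseteq> fst ` supp y" for k
    by (auto simp: r_def supp_def image_iff dest: sum.not_neutral_contains_not_neutral)
  then have "finite (supp (r k))" for k
    using y finite_subset by (fastforce simp: SG_def)
  then have x: "x \<in> PQ n"
    unfolding x_def by (rule sum_ending_paths_in_PQ)
  have "psi n \<xi> x (w, j) = y (w, j)" for w j
  proof (cases "j < n")
    case True
    have "psi n \<xi> x (w, j) = (\<Sum>k<n. ending_words n x k w * fG n \<xi> k j)"
      by (rule psi_apply[OF x])
    also have "\<dots> = (\<Sum>k<n. r k w * fG n \<xi> k j)"
      by (intro sum.cong refl) (simp add: x_def ending_words_sum_ending_paths)
    finally show ?thesis
      using True by (simp add: r_def fourier_inversion')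
  next
    case False
    then show ?thesis
      using y by (auto simp: psi_apply[OF x] fG_def SG_def)
  qed
  then show ?thesis
    using x by (intro bexI[of _ x]) auto
qed

end

theorem lemma3p4:
  fixes n :: nat and \<xi> :: "'a::field_char_0" and \<beta> :: "nat \<Rightarrow> 'a"
  assumes alg_closed: "\<forall>p :: 'a poly. degree p \<noteq> 0 \<longrightarrow> (\<exists>x. poly p x = 0)"
    and n2: "n \<ge> 2"
    and prim: "primitive_root n \<xi>"
    and beta: "\<forall>i<n. \<beta> i = -1"
  shows
    "(\<forall>x \<in> PQ n. \<forall>y \<in> PQ n.
        (\<lambda>c. psi n \<xi> (conv (path_mult n) x y) c - smul n \<xi> (psi n \<xi> x) (psi n \<xi> y) c) \<in> J_skew)
   \<and> (\<forall>x \<in> PQ n. psi n \<xi> x \<in> J_skew \<longleftrightarrow> x \<in> H_ideal n (\<lambda>_. 0) \<beta>)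
   \<and> (\<forall>x \<in> PQ n. \<exists>y \<in> SG n.
        (\<lambda>c. psi n \<xi> x c - smul n \<xi> (smul n \<xi> (ff n \<xi>) y) (ff n \<xi>) c) \<in> J_skew)
   \<and> (\<forall>y \<in> SG n. \<exists>x \<in> PQ n.
        (\<lambda>c. smul n \<xi> (smul n \<xi> (ff n \<xi>) y) (ff n \<xi>) c - psi n \<xi> x c) \<in> J_skew)"
proof -
  interpret primitive_nth_root n \<xi>
    using n2 prim by unfold_locales simp
  show ?thesis
  proof (intro conjI ballI)
    fix x y :: "nat \<times> letter list \<Rightarrow> 'a"
    assume "x \<in> PQ n" "y \<in> PQ n"
    then show "(\<lambda>c. psi n \<xi> (conv (path_mult n) x y) c - smul n \<xi> (psi n \<xi> x) (psi n \<xi> y) c) \<in> J_skew"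
      by (simp add: psi_mult zero_in_J_skew)
  next
    fix x :: "nat \<times> letter list \<Rightarrow> 'a"
    assume "x \<in> PQ n"
    then show "psi n \<xi> x \<in> J_skew \<longleftrightarrow> x \<in> H_ideal n (\<lambda>_. 0) \<beta>"
      by (simp add: psi_in_J_skew_iff H_ideal_iff_ending_words beta)
  next
    fix x :: "nat \<times> letter list \<Rightarrow> 'a"
    assume "x \<in> PQ n"
    then have "psi n \<xi> x \<in> SG n"
      by (simp add: psi_in_SG PQ_finite_supp)
    then show "\<exists>y \<in> SG n. (\<lambda>c. psi n \<xi> x c - smul n \<xi> (smul n \<xi> (ff n \<xi>) y) (ff n \<xi>) c) \<in> J_skew"
      using zero_in_J_skew by (intro bexI[of _ "psi n \<xi> x"]) (simp_all add: ff_mult_ff_eq)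
  next
    fix y :: "letter list \<times> nat \<Rightarrow> 'a"
    assume y: "y \<in> SG n"
    then obtain x where "x \<in> PQ n" "psi n \<xi> x = y"
      using psi_surj_SG by blast
    then show "\<exists>x \<in> PQ n. (\<lambda>c. smul n \<xi> (smul n \<xi> (ff n \<xi>) y) (ff n \<xi>) c - psi n \<xi> x c) \<in> J_skew"
      using y zero_in_J_skew by (intro bexI[of _ x]) (simp_all add: ff_mult_ff_eq)
  qed
qed

end
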